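(* Let $\widehat{\Theta}$ and $\widehat{\Theta}'$ be local $\mathrm{Aut}(F_\infty)$ representations of the same type $\mathcal{L}\in\{A_r\ (r\in\mathbb{Z}_{\ge0}),B,C,D\}$. Then for every oriented link $L$ in $S^3$, $G_{\widehat{\Theta}}(L)\cong G_{\widehat{\Theta}'}(L)$. In particular, if $\tau\in\mathrm{Aut}(F_2)$ is such that the constant sequence $(\tau,\tau,\tau,\dots)$ defines a local $\mathrm{Aut}(F_\infty)$ representation $\widehat{\Theta}_{\tau}$ (a Wada-type representation) of type $\mathcal{L}$, then $G_{\widehat{\Theta}}(L)\cong G_{\widehat{\Theta}_{\tau}}(L)$ for every oriented link $L$.
   Context: $F_2$ is free on $a,b$; $F_n$ is free on $x_1,\dots,x_n$; $B_n$ has standard generators $\sigma_1,\dots,\sigma_{n-1}$ and acts on the right, writing $(x)\phi$. For a word $W$ in $a^{\pm1},b^{\pm1}$, $W(U,V)$ denotes substitution of $U$ for $a$, $V$ for $b$. For $\tau\in\mathrm{Aut}(F_2)$, $T^i(\tau)\in\mathrm{Aut}(F_n)$ fixes $x_j$ ($j\ne i,i+1$) and sends $x_i\mapsto\tau(a)(x_i,x_{i+1})$, $x_{i+1}\mapsto\tau(b)(x_i,x_{i+1})$. A sequence $(\tau_1,\dots,\tau_{n-1})$ in $\mathrm{Aut}(F_2)$ defines a local $\mathrm{Aut}(F_n)$ representation $\Theta_n$ if $\sigma_i\mapsto T^i(\tau_i)$ extends to a homomorphism $B_n\to\mathrm{Aut}(F_n)$. A local $\mathrm{Aut}(F_\infty)$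 representation $\widehat{\Theta}$ is a sequence $(\tau_1,\tau_2,\dots)$ such that for every $n$, $(\tau_1,\dots,\tau_{n-1})$ defines a local $\mathrm{Aut}(F_n)$ representation $\Theta_n$. For $\beta\in B_n$, $G_{\Theta_n}(\beta)=\langle x_1,\dots,x_n\mid (x_i)\Theta_n(\beta)=x_i,\ i=1,\dots,n\rangle$, and $G_{\widehat{\Theta}}(L):=G_{\Theta_n}(\beta)$ for any $n$ and any $\beta\in B_n$ whose closure is $L$ (for the types considered this is well defined up to isomorphism). Natural symmetries on quadruples $(A,B,C,D)$ of reduced words (with $\tau:a\mapsto A,b\mapsto B$, $\kappa:a\mapsto C,b\mapsto D$ automorphisms): Inverse gives the reduced words of $\tau^{-1}(a),\tau^{-1}(b),\kappa^{-1}(a),\kappa^{-1}(b)$; Swap gives $(D^{\sigma},C^{\sigma},B^{\sigma},A^{\sigma})$, $W^\sigma$ interchanging letters $a,b$; Backward gives the four words read backwards. Equivalence up to natural symmetries: related by a composition of these. Labelled list: type $A_r$ ($r\ge0$): $(a^{r}ba^{-r},a,a^{r}ba^{-r},a)$, $(a^{r}ba^{-r},a,a^{r}b^{-1}a^{-r},a^{-1})$, $(a^{r}b^{-1}a^{-r},a^{-1},a^{-r}b^{-1}a^{r},a^{-1})$; type $B$: $(b^{-1},a,b^{-1},a)$, $(b^{-1},a,b,a^{-1})$; type $C$: $(ab^{-1}a,a,ab^{-1}a,a)$, $(ab^{-1}a,a,aba,a^{-1})$, $(aba,a^{-1},aba,a^{-1})$; type $D$: $(a^{-1}b^{-1}a,b^{2}a,a^{-1}b^{-1}a,b^{2}a)$,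 $(aba^{-1},b^{2}a^{-1},a^{-1}b^{-1}a,b^{2}a)$, $(a^{-1}b^{-1}a,b^{2}a,a^{-1}ba,a^{-1}b^{2})$, $(aba^{-1},b^{2}a^{-1},a^{-1}ba,a^{-1}b^{2})$. A local $\mathrm{Aut}(F_\infty)$ representation $(\tau_1,\tau_2,\dots)$ is of type $\mathcal{L}$ if for every $i\ge1$ the quadruple of reduced words $(\tau_i(a),\tau_i(b),\tau_{i+1}(a),\tau_{i+1}(b))$ is equivalent up to natural symmetries to a listed quadruple of type $\mathcal{L}$. *)

theory Defs
  imports "HOL-Algebra.Group"
begin

text \<open>A letter is (generator index, sign); True = positive exponent.
  In F_2 the generator a has index 0 and b has index 1.
  In F_n the generators x_1, ..., x_n have indices 1, ..., n.\<close>

type_synonym letter = "nat \<times> bool"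
type_synonym word = "letter list"

definition inv_letter :: "letter \<Rightarrow> letter" where
  "inv_letter l = (fst l, \<not> snd l)"

definition inv_word :: "word \<Rightarrow> word" where
  "inv_word w = rev (map inv_letter w)"

text \<open>Free reduction (stack algorithm): the unique reduced word freely equal to w.\<close>
definition reduce :: "word \<Rightarrow> word" where
  "reduce w = foldr (\<lambda>x acc. case acc of [] \<Rightarrow> [x]
                 | y # ys \<Rightarrow> (if y = inv_letter x then ys else x # acc)) w []"

definition word_over :: "nat set \<Rightarrow> word \<Rightarrow> bool" where
  "word_over S w \<longleftrightarrow> (\<forall>l \<in> set w. fst l \<in> S)"

text \<open>Endomorphisms of a free group are given by the images of the generators
  (a function from generator indices to words); substitution applies them to words.\<close>
definition subst :: "(nat \<Rightarrow> word) \<Rightarrow> word \<Rightarrow> word" where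
  "subst f w = concat (map (\<lambda>l. if snd l then f (fst l) else inv_word (f (fst l))) w)"

text \<open>Right action composition: (x)(phi psi) = ((x)phi)psi.\<close>
definition rcomp :: "(nat \<Rightarrow> word) \<Rightarrow> (nat \<Rightarrow> word) \<Rightarrow> (nat \<Rightarrow> word)" where
  "rcomp \<phi> \<psi> = (\<lambda>j. subst \<psi> (\<phi> j))"

definition endo_id :: "nat \<Rightarrow> word" where
  "endo_id = (\<lambda>j. [(j, True)])"

definition endo_eq :: "nat \<Rightarrow> (nat \<Rightarrow> word) \<Rightarrow> (nat \<Rightarrow> word) \<Rightarrow> bool" where
  "endo_eq n \<phi> \<psi> \<longleftrightarrow> (\<forall>j \<in> {1..n}. reduce (\<phi> j) = reduce (\<psi> j))"

text \<open>An element tau of End(F_2) is given by the pair (tau(a), tau(b)).\<close>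
type_synonym endo2 = "word \<times> word"

definition endo2_fun :: "endo2 \<Rightarrow> nat \<Rightarrow> word" where
  "endo2_fun t = (\<lambda>k. if k = 0 then fst t else snd t)"

definition is_inverse2 :: "endo2 \<Rightarrow> endo2 \<Rightarrow> bool" where
  "is_inverse2 t g \<longleftrightarrow>
     word_over {0,1} (fst g) \<and> word_over {0,1} (snd g) \<and>
     (\<forall>k \<in> {0,1}. reduce (subst (endo2_fun g) (endo2_fun t k)) = [(k, True)]
                \<and> reduce (subst (endo2_fun t) (endo2_fun g k)) = [(k, True)])"

definition is_aut2 :: "endo2 \<Rightarrow> bool" where
  "is_aut2 t \<longleftrightarrow> word_over {0,1} (fst t) \<and> word_over {0,1} (snd t) \<and> (\<exists>g. is_inverse2 t g)"

definition inv2 :: "endo2 \<Rightarrow> endo2" where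
  "inv2 t = (SOME g. is_inverse2 t g)"

text \<open>T^i(tau) in Aut(F_n): x_i \<mapsto> tau(a)(x_i,x_{i+1}), x_{i+1} \<mapsto> tau(b)(x_i,x_{i+1}),
  other generators fixed.\<close>
definition Tloc :: "nat \<Rightarrow> endo2 \<Rightarrow> nat \<Rightarrow> word" where
  "Tloc i t = (\<lambda>j. if j = i then subst (\<lambda>k. [(i + k, True)]) (fst t)
                  else if j = i + 1 then subst (\<lambda>k. [(i + k, True)]) (snd t)
                  else [(j, True)])"

text \<open>(tau_1,...,tau_{n-1}) defines a local Aut(F_n) representation: each tau_i is in Aut(F_2)
  and the assignment sigma_i \<mapsto> T^i(tau_i) respects the defining relations of B_n
  (so that it extends to a homomorphism B_n \<rightarrow> Aut(F_n)).\<close>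
definition local_rep :: "nat \<Rightarrow> (nat \<Rightarrow> endo2) \<Rightarrow> bool" where
  "local_rep n \<tau> \<longleftrightarrow>
     (\<forall>i \<in> {1..<n}. is_aut2 (\<tau> i)) \<and>
     (\<forall>i \<in> {1..<n}. \<forall>j \<in> {1..<n}. i + 2 \<le> j \<longrightarrow>
        endo_eq n (rcomp (Tloc i (\<tau> i)) (Tloc j (\<tau> j)))
                  (rcomp (Tloc j (\<tau> j)) (Tloc i (\<tau> i)))) \<and>
     (\<forall>i \<in> {1..<n}. i + 1 < n \<longrightarrow>
        endo_eq n (rcomp (rcomp (Tloc i (\<tau> i)) (Tloc (i+1) (\<tau> (i+1)))) (Tloc i (\<tau> i)))
                  (rcomp (rcomp (Tloc (i+1) (\<tau> (i+1))) (Tloc i (\<tau> i))) (Tloc (i+1) (\<tau> (i+1)))))"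

text \<open>Local Aut(F_infinity) representation (tau_1, tau_2, ...); index 0 is unused.\<close>
definition local_rep_inf :: "(nat \<Rightarrow> endo2) \<Rightarrow> bool" where
  "local_rep_inf \<tau> \<longleftrightarrow> (\<forall>n. local_rep n \<tau>)"

text \<open>A braid word in B_n: a list of (i, sign) meaning sigma_i^{\<plusminus>1}, 1 \<le> i \<le> n-1.\<close>
definition braid_word :: "nat \<Rightarrow> (nat \<times> bool) list \<Rightarrow> bool" where
  "braid_word n \<beta> \<longleftrightarrow> (\<forall>s \<in> set \<beta>. 1 \<le> fst s \<and> fst s < n)"

definition gen_img :: "(nat \<Rightarrow> endo2) \<Rightarrow> nat \<times> bool \<Rightarrow> nat \<Rightarrow> word" where
  "gen_img \<tau> s = (if snd s then Tloc (fst s) (\<tau> (fst s)) else Tloc (fst s) (inv2 (\<tau> (fst s))))"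

text \<open>Theta_n(beta), with the right action: (x)Theta(s beta) = ((x)Theta(s))Theta(beta).\<close>
fun Theta :: "(nat \<Rightarrow> endo2) \<Rightarrow> (nat \<times> bool) list \<Rightarrow> nat \<Rightarrow> word" where
  "Theta \<tau> [] = endo_id"
| "Theta \<tau> (s # \<beta>) = rcomp (gen_img \<tau> s) (Theta \<tau> \<beta>)"

inductive pres_eq :: "nat set \<Rightarrow> word set \<Rightarrow> word \<Rightarrow> word \<Rightarrow> bool" for S R where
  refl: "pres_eq S R w w"
| sym: "pres_eq S R u v \<Longrightarrow> pres_eq S R v u"
| trans: "pres_eq S R u v \<Longrightarrow> pres_eq S R v w \<Longrightarrow> pres_eq S R u w"
| cancel: "fst x \<in> S \<Longrightarrow> pres_eq S R (u @ [x, inv_letter x] @ v) (u @ v)"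
| rel: "r \<in> R \<Longrightarrow> pres_eq S R (u @ r @ v) (u @ v)"

definition presented_group :: "nat set \<Rightarrow> word set \<Rightarrow> word set monoid" where
  "presented_group S R =
     \<lparr>carrier = (\<lambda>w. {v. pres_eq S R w v}) ` {w. word_over S w},
      monoid.mult = (\<lambda>A B. {v. \<exists>a\<in>A. \<exists>b\<in>B. pres_eq S R (a @ b) v}),
      one = {v. pres_eq S R [] v}\<rparr>"

text \<open>G_{Theta_n}(beta) = < x_1..x_n | (x_i)Theta_n(beta) = x_i >, relators (x_i)Theta_n(beta) x_i^{-1}.\<close>
definition G_Theta :: "(nat \<Rightarrow> endo2) \<Rightarrow> nat \<Rightarrow> (nat \<times> bool) list \<Rightarrow> word set monoid" where
  "G_Theta \<tau> n \<beta> = presented_group {1..n} ((\<lambda>i. Theta \<tau> \<beta> i @ [(i, False)]) ` {1..n})"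

type_synonym quad = "word \<times> word \<times> word \<times> word"

definition qinv :: "quad \<Rightarrow> quad" where
  "qinv q = (case q of (A, B, C, D) \<Rightarrow>
     (reduce (fst (inv2 (A, B))), reduce (snd (inv2 (A, B))),
      reduce (fst (inv2 (C, D))), reduce (snd (inv2 (C, D)))))"

definition swap_letters :: "word \<Rightarrow> word" where
  "swap_letters w = map (\<lambda>l. (if fst l = 0 then 1 else 0, snd l)) w"

definition qswap :: "quad \<Rightarrow> quad" where
  "qswap q = (case q of (A, B, C, D) \<Rightarrow>
     (swap_letters D, swap_letters C, swap_letters B, swap_letters A))"

definition qback :: "quad \<Rightarrow> quad" where
  "qback q = (case q of (A, B, C, D) \<Rightarrow> (rev A, rev B, rev C, rev D))"

text \<open>Equivalence up to natural symmetries: related by a composition of Inverse, Swap, Backward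
  (Inverse only applied to quadruples of automorphisms, where it is defined).\<close>
inductive sym_equiv :: "quad \<Rightarrow> quad \<Rightarrow> bool" where
  sym_base: "sym_equiv q q"
| sym_inv: "sym_equiv q (A, B, C, D) \<Longrightarrow> is_aut2 (A, B) \<Longrightarrow> is_aut2 (C, D)
          \<Longrightarrow> sym_equiv q (qinv (A, B, C, D))"
| sym_swap: "sym_equiv q q' \<Longrightarrow> sym_equiv q (qswap q')"
| sym_back: "sym_equiv q q' \<Longrightarrow> sym_equiv q (qback q')"

abbreviation la :: word where "la \<equiv> [(0, True)]"
abbreviation lA :: word where "lA \<equiv> [(0, False)]"
abbreviation lb :: word where "lb \<equiv> [(1, True)]"
abbreviation lB :: word where "lB \<equiv> [(1, False)]"

definition apow :: "nat \<Rightarrow> word" where "apow r = replicate r (0, True)"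
definition aneg :: "nat \<Rightarrow> word" where "aneg r = replicate r (0, False)"

datatype ltype = TA nat | TB | TC | TD

fun listed :: "ltype \<Rightarrow> quad set" where
  "listed (TA r) =
     {(apow r @ lb @ aneg r, la, apow r @ lb @ aneg r, la),
      (apow r @ lb @ aneg r, la, apow r @ lB @ aneg r, lA),
      (apow r @ lB @ aneg r, lA, aneg r @ lB @ apow r, lA)}"
| "listed TB = {(lB, la, lB, la), (lB, la, lb, lA)}"
| "listed TC =
     {(la @ lB @ la, la, la @ lB @ la, la),
      (la @ lB @ la, la, la @ lb @ la, lA),
      (la @ lb @ la, lA, la @ lb @ la, lA)}"
| "listed TD =
     {(lA @ lB @ la, lb @ lb @ la, lA @ lB @ la, lb @ lb @ la),
      (la @ lb @ lA, lb @ lb @ lA, lA @ lB @ la, lb @ lb @ la),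
      (lA @ lB @ la, lb @ lb @ la, lA @ lb @ la, lA @ lb @ lb),
      (la @ lb @ lA, lb @ lb @ lA, lA @ lb @ la, lA @ lb @ lb)}"

definition of_type :: "ltype \<Rightarrow> (nat \<Rightarrow> endo2) \<Rightarrow> bool" where
  "of_type L \<tau> \<longleftrightarrow> (\<forall>i \<ge> 1. \<exists>q \<in> listed L.
      sym_equiv q (reduce (fst (\<tau> i)), reduce (snd (\<tau> i)),
                   reduce (fst (\<tau> (i+1))), reduce (snd (\<tau> (i+1)))))"

end

theory Submission
  imports Defs
begin

text \<open>Up to free reduction, every pair of a local representation of type L is the conjugate of
  a fixed base pair b, or of its mirror image, by a sign change a \<mapsto> a^\<plusminus>1, b \<mapsto> b^\<plusminus>1, and
  consecutive quadruples force these choices to fit together: there is one global choice between b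
  and its mirror, and signs \<epsilon>_1, \<epsilon>_2, ... such that the i-th pair is its twist by (\<epsilon>_i, \<epsilon>_(i+1)).
  Conjugating F_n by x_i \<mapsto> x_i^\<epsilon>_i turns the action of every braid into the action for the
  constant sequence, and conjugating the endomorphism of a presentation
  \<langle>x | (x_i)\<Theta> = x_i\<rangle> by an automorphism does not change the group. The mirror image is
  reached by conjugating with x_i \<mapsto> x_(n+1-i)^-1, which relabels \<sigma>_i as \<sigma>_(n-i); conjugation
  by the Garside element \<Delta> performs the same relabelling inside B_n, so it does not change
  the groups either.\<close>

section \<open>Words, substitution and free reduction\<close>

lemma inv_letter_inv [simp]: "inv_letter (inv_letter x) = x"
  by (simp add: inv_letter_def)

lemma inv_letter_neq [simp]: "inv_letter x \<noteq> x" "x \<noteq> inv_letter x"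
  by (cases x; simp add: inv_letter_def)+

lemma fst_inv_letter [simp]: "fst (inv_letter x) = fst x"
  by (simp add: inv_letter_def)

lemma inv_letter_pair [simp]: "inv_letter (a, b) = (a, \<not> b)"
  by (simp add: inv_letter_def)

lemma inv_word_Nil [simp]: "inv_word [] = []"
  by (simp add: inv_word_def)

lemma inv_word_Cons [simp]: "inv_word (x # w) = inv_word w @ [inv_letter x]"
  by (simp add: inv_word_def)

lemma inv_word_append [simp]: "inv_word (u @ v) = inv_word v @ inv_word u"
  by (simp add: inv_word_def)

lemma inv_word_inv_word [simp]: "inv_word (inv_word w) = w"
  by (simp add: inv_word_def rev_map comp_def)

lemma word_over_append [simp]: "word_over S (u @ v) \<longleftrightarrow> word_over S u \<and> word_over S v"
  by (auto simp: word_over_def)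

lemma word_over_Cons [simp]: "word_over S (x # v) \<longleftrightarrow> fst x \<in> S \<and> word_over S v"
  by (auto simp: word_over_def)

lemma word_over_Nil [simp]: "word_over S []"
  by (simp add: word_over_def)

lemma word_over_inv_word [simp]: "word_over S (inv_word w) \<longleftrightarrow> word_over S w"
  by (induct w) auto

lemma word_over_replicate [simp]: "word_over S (replicate r x) \<longleftrightarrow> r = 0 \<or> fst x \<in> S"
  by (induct r) auto

lemma word_over_UNIV [simp]: "word_over UNIV w"
  by (simp add: word_over_def)

lemma subst_Nil [simp]: "subst f [] = []"
  by (simp add: subst_def)

lemma subst_Cons [simp]:
  "subst f (x # w) = (if snd x then f (fst x) else inv_word (f (fst x))) @ subst f w"
  by (simp add: subst_def)

lemma subst_append [simp]: "subst f (u @ v) = subst f u @ subst f v"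
  by (simp add: subst_def)

lemma subst_inv_word [simp]: "subst f (inv_word w) = inv_word (subst f w)"
  by (induct w) auto

lemma subst_replicate:
  "subst f (replicate r x) = concat (replicate r (if snd x then f (fst x) else inv_word (f (fst x))))"
  by (induct r) auto

lemma subst_subst: "subst f (subst g w) = subst (\<lambda>j. subst f (g j)) w"
  by (induct w) auto

lemma subst_gen [simp]: "subst (\<lambda>j. [(j, True)]) w = w"
  by (induct w) auto

lemma subst_endo_id [simp]: "subst endo_id w = w"
  by (simp add: endo_id_def)

lemma subst_cong: "(\<And>j. j \<in> fst ` set w \<Longrightarrow> f j = g j) \<Longrightarrow> subst f w = subst g w"
  by (induct w) auto

lemma word_over_subst:
  "(\<And>j. j \<in> fst ` set w \<Longrightarrow> word_over S (f j)) \<Longrightarrow> word_over S (subst f w)"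
  by (induct w) auto

definition reduce_step :: "letter \<Rightarrow> word \<Rightarrow> word" where
  "reduce_step x acc = (case acc of [] \<Rightarrow> [x] | y # ys \<Rightarrow> (if y = inv_letter x then ys else x # acc))"

lemma reduce_Nil [simp]: "reduce [] = []"
  by (simp add: reduce_def)

lemma reduce_Cons: "reduce (x # w) = reduce_step x (reduce w)"
  by (simp add: reduce_def reduce_step_def)

lemma reduce_single [simp]: "reduce [x] = [x]"
  by (simp add: reduce_Cons reduce_step_def)

fun reduced :: "word \<Rightarrow> bool" where
  "reduced [] = True"
| "reduced [x] = True"
| "reduced (x # y # ys) \<longleftrightarrow> y \<noteq> inv_letter x \<and> reduced (y # ys)"

lemma reduced_Cons: "reduced (x # v) \<longleftrightarrow> reduced v \<and> (v \<noteq> [] \<longrightarrow> hd v \<noteq> inv_letter x)"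
  by (cases v) auto

lemma reduced_reduce: "reduced (reduce w)"
  by (induct w) (auto simp: reduce_Cons reduce_step_def reduced_Cons split: list.split)

lemma reduce_reduced: "reduced w \<Longrightarrow> reduce w = w"
  by (induct w rule: reduced.induct) (auto simp: reduce_Cons reduce_step_def)

lemma reduce_reduce [simp]: "reduce (reduce w) = reduce w"
  by (rule reduce_reduced[OF reduced_reduce])

lemma reduce_step_cancel: "reduced s \<Longrightarrow> reduce_step x (reduce_step (inv_letter x) s) = s"
  by (cases s rule: reduced.cases) (auto simp: reduce_step_def)

lemma reduce_cancel: "reduce (u @ x # inv_letter x # v) = reduce (u @ v)"
proof (induct u)
  case Nil
  show ?case by (simp add: reduce_Cons reduce_step_cancel reduced_reduce)
qed (simp add: reduce_Cons)

declare pres_eq.trans [trans]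

lemma pres_eq_append_cong: "pres_eq S R u v \<Longrightarrow> pres_eq S R (a @ u @ b) (a @ v @ b)"
proof (induct rule: pres_eq.induct)
  case (cancel x u v)
  then show ?case using pres_eq.cancel[of x S R "a @ u" "v @ b"] by simp
next
  case (rel r u v)
  then show ?case using pres_eq.rel[of r R S "a @ u" "v @ b"] by simp
qed (blast intro: pres_eq.intros)+

lemma pres_eq_append:
  "pres_eq S R u u' \<Longrightarrow> pres_eq S R v v' \<Longrightarrow> pres_eq S R (u @ v) (u' @ v')"
  using pres_eq_append_cong[of S R u u' "[]" v] pres_eq_append_cong[of S R v v' u' "[]"]
  by (auto intro: pres_eq.trans)

lemma pres_eq_cancel_word: "word_over S w \<Longrightarrow> pres_eq S R (w @ inv_word w) []"
proof (induct w)
  case (Cons x w)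
  then have "pres_eq S R ([x] @ (w @ inv_word w) @ [inv_letter x]) ([x] @ [] @ [inv_letter x])"
    by (intro pres_eq_append_cong) simp
  moreover have "pres_eq S R ([] @ [x, inv_letter x] @ []) ([] @ [])"
    using Cons by (intro pres_eq.cancel) simp
  ultimately show ?case by (auto intro: pres_eq.trans)
qed (simp add: pres_eq.refl)

lemma pres_eq_cancel_word': "word_over S w \<Longrightarrow> pres_eq S R (inv_word w @ w) []"
  using pres_eq_cancel_word[of S "inv_word w" R] by simp

lemma pres_eq_reduce: "word_over S w \<Longrightarrow> pres_eq S R w (reduce w)"
proof (induct w)
  case (Cons x w)
  then have xw: "pres_eq S R (x # w) (x # reduce w)"
    using pres_eq_append_cong[of S R w "reduce w" "[x]" "[]"] by simp
  show ?case
  proof (cases "reduce w")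
    case (Cons y ys)
    moreover have "pres_eq S R ([] @ [x, inv_letter x] @ ys) ([] @ ys)"
      using \<open>word_over S (x # w)\<close> by (intro pres_eq.cancel) simp
    ultimately show ?thesis
      using xw by (auto simp: reduce_Cons reduce_step_def intro: pres_eq.trans)
  qed (use xw in \<open>simp add: reduce_Cons reduce_step_def\<close>)
qed (simp add: pres_eq.refl)

lemma pres_eq_if_reduce_eq:
  "reduce u = reduce v \<Longrightarrow> word_over S u \<Longrightarrow> word_over S v \<Longrightarrow> pres_eq S R u v"
  by (metis pres_eq.sym pres_eq.trans pres_eq_reduce)

lemma reduce_eq_iff_free_eq: "reduce u = reduce v \<longleftrightarrow> pres_eq UNIV {} u v"
proof
  show "pres_eq UNIV {} u v \<Longrightarrow> reduce u = reduce v"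
    by (induct rule: pres_eq.induct) (simp_all add: reduce_cancel)
qed (simp add: pres_eq_if_reduce_eq)

lemma reduce_append_cong:
  "reduce u = reduce u' \<Longrightarrow> reduce v = reduce v' \<Longrightarrow> reduce (u @ v) = reduce (u' @ v')"
  by (simp add: reduce_eq_iff_free_eq pres_eq_append)

lemma reduce_inv_word_cong: "reduce u = reduce v \<Longrightarrow> reduce (inv_word u) = reduce (inv_word v)"
  unfolding reduce_eq_iff_free_eq
proof (induct rule: pres_eq.induct)
  case (cancel x u v)
  then show ?case using pres_eq.cancel[of x UNIV "{}" "inv_word v" "inv_word u"] by simp
qed (auto intro: pres_eq.intros)

lemma reduce_subst_cong: "reduce u = reduce v \<Longrightarrow> reduce (subst f u) = reduce (subst f v)"
  unfolding reduce_eq_iff_free_eq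
proof (induct rule: pres_eq.induct)
  case (cancel x u v)
  have "pres_eq UNIV {} (subst f [x, inv_letter x]) []"
    by (cases x) (auto intro: pres_eq_cancel_word pres_eq_cancel_word')
  from pres_eq_append_cong[OF this, of "subst f u" "subst f v"] show ?case
    by simp
qed (auto intro: pres_eq.intros)

lemma reduce_subst_fun_cong:
  "(\<And>j. j \<in> fst ` set w \<Longrightarrow> reduce (f j) = reduce (g j)) \<Longrightarrow> reduce (subst f w) = reduce (subst g w)"
proof (induct w)
  case (Cons x w)
  then have "reduce (f (fst x)) = reduce (g (fst x))" "reduce (subst f w) = reduce (subst g w)"
    by auto
  then show ?case
    by (auto intro: reduce_append_cong reduce_inv_word_cong)
qed simp

lemma reduce_replicate_cancel:
  "reduce (u @ replicate r x @ replicate r (inv_letter x) @ w) = reduce (u @ w)"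
proof (induct r arbitrary: u)
  case (Suc r)
  have "u @ replicate (Suc r) x @ replicate (Suc r) (inv_letter x) @ w =
        (u @ replicate r x) @ x # inv_letter x # (replicate r (inv_letter x) @ w)"
    by (simp add: replicate_append_same[symmetric])
  then show ?case using Suc[of u] by (simp only: reduce_cancel) simp
qed simp

section \<open>Presented groups\<close>

definition pres_class :: "nat set \<Rightarrow> word set \<Rightarrow> word \<Rightarrow> word set" where
  "pres_class S R w = {v. pres_eq S R w v}"

lemma pres_class_eq_iff: "pres_class S R a = pres_class S R b \<longleftrightarrow> pres_eq S R a b"
  unfolding pres_class_def by (blast intro: pres_eq.refl pres_eq.sym pres_eq.trans)

lemma carrier_presented_group: "carrier (presented_group S R) = pres_class S R ` {w. word_over S w}"
  by (simp add: presented_group_def pres_class_def)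

lemma one_presented_group: "\<one>\<^bsub>presented_group S R\<^esub> = pres_class S R []"
  by (simp add: presented_group_def pres_class_def)

lemma mult_presented_group:
  "pres_class S R a \<otimes>\<^bsub>presented_group S R\<^esub> pres_class S R b = pres_class S R (a @ b)"
  unfolding presented_group_def pres_class_def
  by (auto intro: pres_eq.refl pres_eq.trans pres_eq_append)

lemma group_presented_group: "group (presented_group S R)"
proof (rule groupI)
  let ?G = "presented_group S R"
  fix x assume "x \<in> carrier ?G"
  then obtain a where a: "word_over S a" "x = pres_class S R a"
    by (auto simp: carrier_presented_group)
  show "\<one>\<^bsub>?G\<^esub> \<otimes>\<^bsub>?G\<^esub> x = x"
    using a by (simp add: one_presented_group mult_presented_group)
  have "pres_eq S R (inv_word a @ a) []"
    using a(1) by (rule pres_eq_cancel_word')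
  then have "pres_class S R (inv_word a) \<otimes>\<^bsub>?G\<^esub> x = \<one>\<^bsub>?G\<^esub>"
    using a by (simp add: one_presented_group mult_presented_group pres_class_eq_iff)
  moreover have "pres_class S R (inv_word a) \<in> carrier ?G"
    using a by (simp add: carrier_presented_group)
  ultimately show "\<exists>y\<in>carrier ?G. y \<otimes>\<^bsub>?G\<^esub> x = \<one>\<^bsub>?G\<^esub>"
    by blast
qed (auto simp: carrier_presented_group one_presented_group mult_presented_group)

definition presentation_map ::
    "nat set \<Rightarrow> word set \<Rightarrow> nat set \<Rightarrow> word set \<Rightarrow> (nat \<Rightarrow> word) \<Rightarrow> bool" where
  "presentation_map S R S' R' \<psi> \<longleftrightarrow>
     (\<forall>j\<in>S. word_over S' (\<psi> j)) \<and> (\<forall>r\<in>R. pres_eq S' R' (subst \<psi> r) [])"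

definition induced_map ::
    "nat set \<Rightarrow> word set \<Rightarrow> (nat \<Rightarrow> word) \<Rightarrow> word set \<Rightarrow> word set" where
  "induced_map S' R' \<psi> X = (\<Union>w\<in>X. pres_class S' R' (subst \<psi> w))"

lemma pres_eq_word_over:
  assumes "\<forall>r\<in>R. word_over S r"
  shows "pres_eq S R u v \<Longrightarrow> word_over S u \<longleftrightarrow> word_over S v"
  by (induct rule: pres_eq.induct) (use assms in auto)

lemma presentation_map_word_over:
  "presentation_map S R S' R' \<psi> \<Longrightarrow> word_over S w \<Longrightarrow> word_over S' (subst \<psi> w)"
  by (rule word_over_subst) (auto simp: word_over_def presentation_map_def)

lemma pres_eq_subst:
  assumes RS: "\<forall>r\<in>R. word_over S r" and \<psi>: "presentation_map S R S' R' \<psi>"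
  shows "pres_eq S R u v \<Longrightarrow> word_over S u \<Longrightarrow> pres_eq S' R' (subst \<psi> u) (subst \<psi> v)"
proof (induct rule: pres_eq.induct)
  case (sym u v)
  then show ?case using pres_eq_word_over[OF RS] by (blast intro: pres_eq.sym)
next
  case (trans u v w)
  then show ?case using pres_eq_word_over[OF RS] by (blast intro: pres_eq.trans)
next
  case (cancel x u v)
  then have "word_over S' (\<psi> (fst x))"
    using \<psi> by (simp add: presentation_map_def)
  then have "pres_eq S' R' (subst \<psi> [x, inv_letter x]) []"
    by (cases x) (auto intro: pres_eq_cancel_word pres_eq_cancel_word')
  from pres_eq_append_cong[OF this, of "subst \<psi> u" "subst \<psi> v"] show ?case
    by simp
next
  case (rel r u v)
  then have "pres_eq S' R' (subst \<psi> r) []"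
    using \<psi> by (simp add: presentation_map_def)
  from pres_eq_append_cong[OF this, of "subst \<psi> u" "subst \<psi> v"] show ?case
    by simp
qed (rule pres_eq.refl)

lemma induced_map_pres_class:
  assumes RS: "\<forall>r\<in>R. word_over S r" and \<psi>: "presentation_map S R S' R' \<psi>" and a: "word_over S a"
  shows "induced_map S' R' \<psi> (pres_class S R a) = pres_class S' R' (subst \<psi> a)"
proof -
  have "pres_class S' R' (subst \<psi> w) = pres_class S' R' (subst \<psi> a)" if "pres_eq S R a w" for w
    using pres_eq_subst[OF RS \<psi> that a] by (simp add: pres_class_eq_iff pres_eq.sym)
  then show ?thesis
    unfolding induced_map_def by (auto simp: pres_class_def[of S R a] intro: pres_eq.refl)
qed

lemma induced_map_hom:
  assumes RS: "\<forall>r\<in>R. word_over S r" and \<psi>: "presentation_map S R S' R' \<psi>"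
  shows "induced_map S' R' \<psi> \<in> hom (presented_group S R) (presented_group S' R')"
proof (rule homI)
  note ov = presentation_map_word_over[OF \<psi>]
  show "induced_map S' R' \<psi> x \<in> carrier (presented_group S' R')"
    if "x \<in> carrier (presented_group S R)" for x
    using that ov by (auto simp: carrier_presented_group induced_map_pres_class[OF RS \<psi>])
  show "induced_map S' R' \<psi> (x \<otimes>\<^bsub>presented_group S R\<^esub> y) =
        induced_map S' R' \<psi> x \<otimes>\<^bsub>presented_group S' R'\<^esub> induced_map S' R' \<psi> y"
    if "x \<in> carrier (presented_group S R)" "y \<in> carrier (presented_group S R)" for x y
    using that by (auto simp: carrier_presented_group mult_presented_group induced_map_pres_class[OF RS \<psi>])
qed

lemma induced_map_comp:
  assumes RS: "\<forall>r\<in>R. word_over S r" and RS': "\<forall>r\<in>R'. word_over S' r"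
    and \<psi>: "presentation_map S R S' R' \<psi>" and \<phi>: "presentation_map S' R' S R \<phi>"
    and inv: "\<And>w. word_over S w \<Longrightarrow> pres_eq S R (subst \<phi> (subst \<psi> w)) w"
    and x: "x \<in> carrier (presented_group S R)"
  shows "induced_map S R \<phi> (induced_map S' R' \<psi> x) = x"
proof -
  obtain a where a: "word_over S a" "x = pres_class S R a"
    using x by (auto simp: carrier_presented_group)
  then have "word_over S' (subst \<psi> a)"
    using presentation_map_word_over[OF \<psi>] by blast
  with a show ?thesis
    by (simp add: induced_map_pres_class[OF RS \<psi>] induced_map_pres_class[OF RS' \<phi>]
        pres_class_eq_iff inv)
qed

lemma presented_group_iso:
  assumes RS: "\<forall>r\<in>R. word_over S r" and RS': "\<forall>r\<in>R'. word_over S' r"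
    and \<psi>: "presentation_map S R S' R' \<psi>" and \<phi>: "presentation_map S' R' S R \<phi>"
    and inv1: "\<And>w. word_over S w \<Longrightarrow> pres_eq S R (subst \<phi> (subst \<psi> w)) w"
    and inv2: "\<And>w. word_over S' w \<Longrightarrow> pres_eq S' R' (subst \<psi> (subst \<phi> w)) w"
  shows "presented_group S R \<cong> presented_group S' R'"
proof (rule is_isoI)
  have hom: "induced_map S' R' \<psi> \<in> hom (presented_group S R) (presented_group S' R')"
    "induced_map S R \<phi> \<in> hom (presented_group S' R') (presented_group S R)"
    by (rule induced_map_hom[OF RS \<psi>], rule induced_map_hom[OF RS' \<phi>])
  have "bij_betw (induced_map S' R' \<psi>) (carrier (presented_group S R)) (carrier (presented_group S' R'))"
    by (rule bij_betw_byWitness[where f' = "induced_map S R \<phi>"])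
      (use hom induced_map_comp[OF RS RS' \<psi> \<phi> inv1] induced_map_comp[OF RS' RS \<phi> \<psi> inv2]
        in \<open>auto simp: hom_def\<close>)
  with hom show "induced_map S' R' \<psi> \<in> iso (presented_group S R) (presented_group S' R')"
    by (simp add: iso_def)
qed

section \<open>Endomorphisms of free groups\<close>

definition endo_over :: "nat \<Rightarrow> (nat \<Rightarrow> word) \<Rightarrow> bool" where
  "endo_over n \<phi> \<longleftrightarrow> (\<forall>j\<in>{1..n}. word_over {1..n} (\<phi> j))"

lemma endo_eq_refl [simp]: "endo_eq n \<phi> \<phi>"
  by (simp add: endo_eq_def)

lemma endo_eq_sym: "endo_eq n \<phi> \<psi> \<Longrightarrow> endo_eq n \<psi> \<phi>"
  by (simp add: endo_eq_def)

lemma endo_eq_trans [trans]: "endo_eq n \<phi> \<psi> \<Longrightarrow> endo_eq n \<psi> \<chi> \<Longrightarrow> endo_eq n \<phi> \<chi>"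
  by (simp add: endo_eq_def)

lemma rcomp_assoc: "rcomp (rcomp \<phi> \<psi>) \<chi> = rcomp \<phi> (rcomp \<psi> \<chi>)"
  by (simp add: rcomp_def subst_subst fun_eq_iff)

lemma rcomp_endo_id [simp]: "rcomp \<phi> endo_id = \<phi>" "rcomp endo_id \<phi> = \<phi>"
  by (simp_all add: rcomp_def fun_eq_iff endo_id_def)

lemma subst_rcomp: "subst (rcomp \<phi> \<psi>) w = subst \<psi> (subst \<phi> w)"
  by (simp add: rcomp_def subst_subst)

lemma endo_over_endo_id [simp]: "endo_over n endo_id"
  by (simp add: endo_over_def endo_id_def)

lemma word_over_subst_endo:
  assumes "endo_over n \<psi>" "word_over {1..n} w"
  shows "word_over {1..n} (subst \<psi> w)"
proof (rule word_over_subst)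
  fix j assume "j \<in> fst ` set w"
  then have "j \<in> {1..n}"
    using assms(2) by (auto simp: word_over_def)
  then show "word_over {1..n} (\<psi> j)"
    using assms(1) by (simp add: endo_over_def)
qed

lemma endo_over_rcomp [intro]: "endo_over n \<phi> \<Longrightarrow> endo_over n \<psi> \<Longrightarrow> endo_over n (rcomp \<phi> \<psi>)"
  unfolding endo_over_def rcomp_def using word_over_subst_endo[of n \<psi>] by (simp add: endo_over_def)

lemma reduce_subst_endo_eq:
  "endo_eq n \<psi> \<psi>' \<Longrightarrow> word_over {1..n} w \<Longrightarrow> reduce (subst \<psi> w) = reduce (subst \<psi>' w)"
  by (rule reduce_subst_fun_cong) (auto simp: endo_eq_def word_over_def)

lemma endo_eq_rcomp:
  assumes "endo_over n \<phi>'" "endo_eq n \<phi> \<phi>'" "endo_eq n \<psi> \<psi>'"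
  shows "endo_eq n (rcomp \<phi> \<psi>) (rcomp \<phi>' \<psi>')"
  unfolding endo_eq_def rcomp_def
proof
  fix j assume j: "j \<in> {1..n}"
  have "reduce (subst \<psi> (\<phi> j)) = reduce (subst \<psi> (\<phi>' j))"
    using assms(2) j by (intro reduce_subst_cong) (simp add: endo_eq_def)
  also have "\<dots> = reduce (subst \<psi>' (\<phi>' j))"
    using assms j by (intro reduce_subst_endo_eq) (auto simp: endo_over_def)
  finally show "reduce (subst \<psi> (\<phi> j)) = reduce (subst \<psi>' (\<phi>' j))" .
qed

lemma endo_eq_rcomp_left: "endo_over n \<phi> \<Longrightarrow> endo_eq n \<psi> \<psi>' \<Longrightarrow> endo_eq n (rcomp \<phi> \<psi>) (rcomp \<phi> \<psi>')"
  by (rule endo_eq_rcomp) simp_all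

lemma endo_eq_rcomp_right: "endo_over n \<phi>' \<Longrightarrow> endo_eq n \<phi> \<phi>' \<Longrightarrow> endo_eq n (rcomp \<phi> \<psi>) (rcomp \<phi>' \<psi>)"
  by (rule endo_eq_rcomp) simp_all

definition inverse_endos :: "nat \<Rightarrow> (nat \<Rightarrow> word) \<Rightarrow> (nat \<Rightarrow> word) \<Rightarrow> bool" where
  "inverse_endos n P Q \<longleftrightarrow> endo_over n P \<and> endo_over n Q \<and>
     endo_eq n (rcomp P Q) endo_id \<and> endo_eq n (rcomp Q P) endo_id"

lemma inverse_endos_sym: "inverse_endos n P Q \<Longrightarrow> inverse_endos n Q P"
  by (auto simp: inverse_endos_def)

lemma conj_rcomp:
  assumes PQ: "inverse_endos n P Q" and "endo_over n X"
  shows "endo_eq n (rcomp (rcomp (rcomp Q X) P) (rcomp (rcomp Q Y) P)) (rcomp (rcomp Q (rcomp X Y)) P)"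
proof -
  have "endo_eq n (rcomp (rcomp Q X) (rcomp (rcomp P Q) (rcomp Y P)))
                  (rcomp (rcomp Q X) (rcomp endo_id (rcomp Y P)))"
    using assms by (intro endo_eq_rcomp_left endo_eq_rcomp_right) (auto simp: inverse_endos_def)
  then show ?thesis
    by (simp add: rcomp_assoc)
qed

lemma conj_sym:
  assumes PQ: "inverse_endos n P Q" and Y: "endo_over n Y" and X: "endo_eq n X (rcomp (rcomp Q Y) P)"
  shows "endo_eq n Y (rcomp (rcomp P X) Q)"
proof -
  have "endo_eq n (rcomp (rcomp P X) Q) (rcomp (rcomp P (rcomp (rcomp Q Y) P)) Q)"
    using PQ Y X by (intro endo_eq_rcomp_right endo_eq_rcomp_left) (auto simp: inverse_endos_def)
  also have "\<dots> = rcomp (rcomp P Q) (rcomp Y (rcomp P Q))"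
    by (simp add: rcomp_assoc)
  also have "endo_eq n \<dots> (rcomp endo_id (rcomp Y endo_id))"
    using PQ Y by (intro endo_eq_rcomp endo_eq_rcomp_left) (auto simp: inverse_endos_def)
  finally show ?thesis
    by (simp add: endo_eq_sym)
qed

definition fix_relators :: "nat \<Rightarrow> (nat \<Rightarrow> word) \<Rightarrow> word set" where
  "fix_relators n A = (\<lambda>i. A i @ [(i, False)]) ` {1..n}"

lemma G_Theta_fix_relators: "G_Theta \<tau> n \<beta> = presented_group {1..n} (fix_relators n (Theta \<tau> \<beta>))"
  by (simp add: G_Theta_def fix_relators_def)

lemma fix_relators_word_over: "endo_over n A \<Longrightarrow> \<forall>r\<in>fix_relators n A. word_over {1..n} r"
  by (auto simp: fix_relators_def endo_over_def)

lemma pres_eq_fix_relators_gen: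
  assumes A: "endo_over n A" and i: "i \<in> {1..n}"
  shows "pres_eq {1..n} (fix_relators n A) (subst A [(i, b)]) [(i, b)]"
proof -
  let ?R = "fix_relators n A"
  have r: "A i @ [(i, False)] \<in> ?R"
    using i by (simp add: fix_relators_def)
  show ?thesis
  proof (cases b)
    case True
    have "pres_eq {1..n} ?R (A i) (A i @ [(i, False), (i, True)])"
      using pres_eq.cancel[of "(i, False)" "{1..n}" ?R "A i" "[]"] i by (simp add: pres_eq.sym)
    also have "pres_eq {1..n} ?R \<dots> [(i, True)]"
      using pres_eq.rel[OF r, where S = "{1..n}" and u = "[]" and v = "[(i, True)]"] by simp
    finally show ?thesis
      using True by simp
  next
    case False
    have "pres_eq {1..n} ?R (inv_word (A i)) (inv_word (A i) @ A i @ [(i, False)])"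
      using pres_eq.rel[OF r, where S = "{1..n}" and u = "inv_word (A i)" and v = "[]"] by (simp add: pres_eq.sym)
    also have "pres_eq {1..n} ?R \<dots> [(i, False)]"
      using pres_eq_append[OF pres_eq_cancel_word' pres_eq.refl, of "{1..n}" "A i" ?R "[(i, False)]"] A i
      by (simp add: endo_over_def)
    finally show ?thesis
      using False by simp
  qed
qed

lemma pres_eq_subst_fix_relators:
  assumes A: "endo_over n A"
  shows "word_over {1..n} w \<Longrightarrow> pres_eq {1..n} (fix_relators n A) (subst A w) w"
proof (induct w)
  case (Cons x w)
  have "pres_eq {1..n} (fix_relators n A) (subst A [x] @ subst A w) ([x] @ w)"
    using Cons A pres_eq_fix_relators_gen[of n A "fst x" "snd x"]
    by (intro pres_eq_append) auto
  then show ?case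
    by simp
qed (simp add: pres_eq.refl)

lemma presentation_map_fix_relators:
  assumes A: "endo_over n A" and B: "endo_over n B" and \<phi>\<psi>: "inverse_endos n \<phi> \<psi>"
    and AB: "endo_eq n A (rcomp (rcomp \<psi> B) \<phi>)"
  shows "presentation_map {1..n} (fix_relators n A) {1..n} (fix_relators n B) \<psi>"
  unfolding presentation_map_def
proof (intro conjI ballI)
  let ?R = "fix_relators n B"
  have \<psi>: "endo_over n \<psi>"
    using \<phi>\<psi> by (simp add: inverse_endos_def)
  show "word_over {1..n} (\<psi> j)" if "j \<in> {1..n}" for j
    using \<psi> that by (simp add: endo_over_def)
  fix r assume "r \<in> fix_relators n A"
  then obtain i where i: "i \<in> {1..n}" and r: "r = A i @ [(i, False)]"
    by (auto simp: fix_relators_def)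
  have \<psi>i: "word_over {1..n} (\<psi> i)"
    using \<psi> i by (simp add: endo_over_def)
  have Bi: "word_over {1..n} (subst B (\<psi> i))"
    using B \<psi>i by (rule word_over_subst_endo)
  have Ai: "word_over {1..n} (subst \<psi> (A i))"
    using A i by (intro word_over_subst_endo[OF \<psi>]) (simp add: endo_over_def)
  have "reduce (subst \<psi> (A i)) = reduce (subst \<psi> (subst \<phi> (subst B (\<psi> i))))"
    using AB i by (intro reduce_subst_cong) (simp add: endo_eq_def rcomp_def)
  also have "\<dots> = reduce (subst B (\<psi> i))"
    using reduce_subst_endo_eq[OF _ Bi, of "rcomp \<phi> \<psi>" endo_id] \<phi>\<psi>
    by (simp add: inverse_endos_def subst_rcomp)
  finally have "reduce (subst \<psi> (A i)) = reduce (subst B (\<psi> i))" .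
  then have "pres_eq {1..n} ?R (subst \<psi> (A i) @ inv_word (\<psi> i)) (subst B (\<psi> i) @ inv_word (\<psi> i))"
    using Ai Bi \<psi>i by (intro pres_eq_if_reduce_eq reduce_append_cong) simp_all
  also have "pres_eq {1..n} ?R \<dots> (\<psi> i @ inv_word (\<psi> i))"
    using pres_eq_subst_fix_relators[OF B \<psi>i] pres_eq.refl by (rule pres_eq_append)
  also have "pres_eq {1..n} ?R \<dots> []"
    using \<psi>i by (rule pres_eq_cancel_word)
  finally show "pres_eq {1..n} ?R (subst \<psi> r) []"
    using r by simp
qed

lemma fix_relators_iso_conj:
  assumes A: "endo_over n A" and B: "endo_over n B" and \<phi>\<psi>: "inverse_endos n \<phi> \<psi>"
    and AB: "endo_eq n A (rcomp (rcomp \<psi> B) \<phi>)"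
  shows "presented_group {1..n} (fix_relators n A) \<cong> presented_group {1..n} (fix_relators n B)"
proof (rule presented_group_iso)
  have BA: "endo_eq n B (rcomp (rcomp \<phi> A) \<psi>)"
    by (rule conj_sym[OF \<phi>\<psi> B AB])
  show "presentation_map {1..n} (fix_relators n A) {1..n} (fix_relators n B) \<psi>"
    by (rule presentation_map_fix_relators[OF A B \<phi>\<psi> AB])
  show "presentation_map {1..n} (fix_relators n B) {1..n} (fix_relators n A) \<phi>"
    by (rule presentation_map_fix_relators[OF B A inverse_endos_sym[OF \<phi>\<psi>] BA])
  show "\<forall>r\<in>fix_relators n A. word_over {1..n} r" "\<forall>r\<in>fix_relators n B. word_over {1..n} r"
    by (rule fix_relators_word_over[OF A], rule fix_relators_word_over[OF B])
  have inv: "pres_eq {1..n} R (subst Q (subst P w)) w"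
    if "inverse_endos n P Q" "word_over {1..n} w" for P Q R w
  proof (rule pres_eq_if_reduce_eq)
    show "reduce (subst Q (subst P w)) = reduce w"
      using reduce_subst_endo_eq[OF _ that(2), of "rcomp P Q" endo_id] that(1)
      by (simp add: inverse_endos_def subst_rcomp)
    show "word_over {1..n} (subst Q (subst P w))"
      using that unfolding inverse_endos_def by (blast intro: word_over_subst_endo)
  qed (rule that(2))
  show "pres_eq {1..n} (fix_relators n A) (subst \<phi> (subst \<psi> w)) w"
    if "word_over {1..n} w" for w
    using inv[OF inverse_endos_sym[OF \<phi>\<psi>] that] .
  show "pres_eq {1..n} (fix_relators n B) (subst \<psi> (subst \<phi> w)) w"
    if "word_over {1..n} w" for w
    using inv[OF \<phi>\<psi> that] .
qed

section \<open>Local generators and the induced action of braid words\<close>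

definition shift :: "nat \<Rightarrow> nat \<Rightarrow> word" where
  "shift i = (\<lambda>k. [(i + k, True)])"

definition is_endo2 :: "endo2 \<Rightarrow> bool" where
  "is_endo2 t \<longleftrightarrow> word_over {0,1} (fst t) \<and> word_over {0,1} (snd t)"

lemma is_aut2_is_endo2: "is_aut2 t \<Longrightarrow> is_endo2 t"
  by (simp add: is_aut2_def is_endo2_def)

lemma is_inverse2_is_endo2: "is_inverse2 t g \<Longrightarrow> is_endo2 g"
  by (simp add: is_inverse2_def is_endo2_def)

lemma is_inverse2_sym: "is_inverse2 t g \<Longrightarrow> is_endo2 t \<Longrightarrow> is_inverse2 g t"
  by (auto simp: is_inverse2_def is_endo2_def)

lemma is_inverse2_inv2: "is_aut2 t \<Longrightarrow> is_inverse2 t (inv2 t)"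
  unfolding inv2_def is_aut2_def by (blast intro: someI_ex)

lemma Tloc_at: "Tloc i t i = subst (shift i) (fst t)"
  by (simp add: Tloc_def shift_def)

lemma Tloc_at_Suc: "Tloc i t (Suc i) = subst (shift i) (snd t)"
  by (simp add: Tloc_def shift_def)

lemma Tloc_other: "j \<noteq> i \<Longrightarrow> j \<noteq> Suc i \<Longrightarrow> Tloc i t j = [(j, True)]"
  by (simp add: Tloc_def)

lemma subst_Tloc_shift:
  assumes "word_over {0,1} w"
  shows "subst (Tloc i g) (subst (shift i) w) = subst (shift i) (subst (endo2_fun g) w)"
proof -
  have "subst (Tloc i g) (subst (shift i) w) = subst (\<lambda>k. Tloc i g (i + k)) w"
    by (simp add: subst_subst shift_def)
  also have "\<dots> = subst (\<lambda>k. subst (shift i) (endo2_fun g k)) w"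
    using assms by (intro subst_cong) (auto simp: word_over_def Tloc_def shift_def endo2_fun_def)
  finally show ?thesis
    by (simp add: subst_subst)
qed

lemma word_over_subst_shift:
  "word_over {0,1} w \<Longrightarrow> 1 \<le> i \<Longrightarrow> i < n \<Longrightarrow> word_over {1..n} (subst (shift i) w)"
  by (rule word_over_subst) (auto simp: shift_def word_over_def)

lemma endo_over_Tloc:
  assumes "is_endo2 t" "1 \<le> i" "i < n"
  shows "endo_over n (Tloc i t)"
  unfolding endo_over_def
proof
  fix j assume "j \<in> {1..n}"
  then show "word_over {1..n} (Tloc i t j)"
    using assms word_over_subst_shift[of "fst t" i n] word_over_subst_shift[of "snd t" i n]
    by (cases "j = i"; cases "j = Suc i") (auto simp: Tloc_at Tloc_at_Suc Tloc_other is_endo2_def)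
qed

lemma Tloc_reduce_cong:
  "reduce (fst t) = reduce (fst t') \<Longrightarrow> reduce (snd t) = reduce (snd t') \<Longrightarrow> endo_eq n (Tloc i t) (Tloc i t')"
  unfolding endo_eq_def by (auto simp: Tloc_def intro: reduce_subst_cong)

lemma Tloc_rcomp_inverse:
  assumes g: "is_inverse2 t g" and t: "is_endo2 t"
  shows "endo_eq n (rcomp (Tloc i t) (Tloc i g)) endo_id"
  unfolding endo_eq_def
proof
  fix j
  have inv: "reduce (subst (shift i) (subst (endo2_fun g) (endo2_fun t k))) = [(i + k, True)]"
    if "k \<in> {0,1}" for k
  proof -
    have "reduce (subst (endo2_fun g) (endo2_fun t k)) = reduce [(k, True)]"
      using g that by (auto simp: is_inverse2_def)
    from reduce_subst_cong[OF this, of "shift i"] show ?thesis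
      by (simp add: shift_def)
  qed
  show "reduce (rcomp (Tloc i t) (Tloc i g) j) = reduce (endo_id j)"
    using inv[of 0] inv[of 1] t
    by (cases "j = i"; cases "j = Suc i")
      (auto simp: rcomp_def Tloc_at Tloc_at_Suc Tloc_other subst_Tloc_shift is_endo2_def
        endo2_fun_def endo_id_def)
qed

lemma inverse_endos_Tloc:
  assumes "is_inverse2 t g" "is_endo2 t" "1 \<le> i" "i < n"
  shows "inverse_endos n (Tloc i t) (Tloc i g)"
  using assms is_inverse2_sym[OF assms(1,2)] is_inverse2_is_endo2[OF assms(1)]
  by (simp add: inverse_endos_def endo_over_Tloc Tloc_rcomp_inverse)

lemma inverse_endos_gen_img:
  assumes "is_aut2 (\<tau> (fst s))" "1 \<le> fst s" "fst s < n"
  shows "inverse_endos n (gen_img \<tau> s) (gen_img \<tau> (fst s, \<not> snd s))"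
proof -
  note inv = is_inverse2_inv2[OF assms(1)] and endo = is_aut2_is_endo2[OF assms(1)]
  show ?thesis
  proof (cases "snd s")
    case True
    then show ?thesis
      using inverse_endos_Tloc[OF inv endo assms(2,3)] by (simp add: gen_img_def)
  next
    case False
    then show ?thesis
      using inverse_endos_Tloc[OF is_inverse2_sym[OF inv endo] is_inverse2_is_endo2[OF inv] assms(2,3)]
      by (simp add: gen_img_def)
  qed
qed

lemma endo_over_gen_img:
  "is_aut2 (\<tau> (fst s)) \<Longrightarrow> 1 \<le> fst s \<Longrightarrow> fst s < n \<Longrightarrow> endo_over n (gen_img \<tau> s)"
  using inverse_endos_gen_img by (simp add: inverse_endos_def)

lemma Theta_append: "Theta \<tau> (u @ v) = rcomp (Theta \<tau> u) (Theta \<tau> v)"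
  by (induct u) (simp_all add: rcomp_assoc)

lemma endo_over_Theta:
  "braid_word n \<beta> \<Longrightarrow> \<forall>i\<in>{1..<n}. is_aut2 (\<tau> i) \<Longrightarrow> endo_over n (Theta \<tau> \<beta>)"
proof (induct \<beta>)
  case (Cons s \<beta>)
  then have "endo_over n (gen_img \<tau> s)"
    by (intro endo_over_gen_img) (auto simp: braid_word_def)
  with Cons show ?case
    by (auto simp: braid_word_def)
qed simp

definition braid_inv :: "(nat \<times> bool) list \<Rightarrow> (nat \<times> bool) list" where
  "braid_inv \<beta> = rev (map (\<lambda>s. (fst s, \<not> snd s)) \<beta>)"

lemma braid_inv_Cons [simp]: "braid_inv (s # \<beta>) = braid_inv \<beta> @ [(fst s, \<not> snd s)]"
  by (simp add: braid_inv_def)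

lemma braid_inv_braid_inv [simp]: "braid_inv (braid_inv \<beta>) = \<beta>"
  by (simp add: braid_inv_def rev_map comp_def)

lemma braid_word_braid_inv: "braid_word n \<beta> \<Longrightarrow> braid_word n (braid_inv \<beta>)"
  by (auto simp: braid_word_def braid_inv_def)

lemma Theta_rcomp_braid_inv:
  assumes aut: "\<forall>i\<in>{1..<n}. is_aut2 (\<tau> i)"
  shows "braid_word n \<beta> \<Longrightarrow> endo_eq n (rcomp (Theta \<tau> \<beta>) (Theta \<tau> (braid_inv \<beta>))) endo_id"
proof (induct \<beta>)
  case (Cons s \<beta>)
  then have \<beta>: "braid_word n \<beta>" and s: "1 \<le> fst s" "fst s < n"
    by (auto simp: braid_word_def)
  let ?g = "gen_img \<tau> s" and ?g' = "gen_img \<tau> (fst s, \<not> snd s)"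
  have gen: "inverse_endos n ?g ?g'"
    using aut s by (intro inverse_endos_gen_img) auto
  have eq: "rcomp (Theta \<tau> (s # \<beta>)) (Theta \<tau> (braid_inv (s # \<beta>))) =
            rcomp ?g (rcomp (rcomp (Theta \<tau> \<beta>) (Theta \<tau> (braid_inv \<beta>))) ?g')"
    by (simp add: Theta_append rcomp_assoc)
  have "endo_eq n (rcomp ?g (rcomp (rcomp (Theta \<tau> \<beta>) (Theta \<tau> (braid_inv \<beta>))) ?g'))
                  (rcomp ?g (rcomp endo_id ?g'))"
    using gen Cons(1)[OF \<beta>] by (intro endo_eq_rcomp_left endo_eq_rcomp_right) (simp_all add: inverse_endos_def)
  also have "endo_eq n \<dots> endo_id"
    using gen by (simp add: inverse_endos_def)
  finally show ?case
    unfolding eq .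
qed (simp add: braid_inv_def)

lemma inverse_endos_Theta_braid_inv:
  assumes "\<forall>i\<in>{1..<n}. is_aut2 (\<tau> i)" "braid_word n \<beta>"
  shows "inverse_endos n (Theta \<tau> \<beta>) (Theta \<tau> (braid_inv \<beta>))"
  using Theta_rcomp_braid_inv[OF assms(1)] endo_over_Theta[OF _ assms(1)] assms(2)
    Theta_rcomp_braid_inv[OF assms(1) braid_word_braid_inv[OF assms(2)]]
  by (simp add: inverse_endos_def braid_word_braid_inv)

lemma conj_inverse:
  assumes PQ: "inverse_endos n P Q" and XY: "inverse_endos n X Y" and XY': "inverse_endos n X' Y'"
    and X': "endo_eq n X' (rcomp (rcomp Q X) P)"
  shows "endo_eq n Y' (rcomp (rcomp Q Y) P)"
proof -
  have over: "endo_over n (rcomp (rcomp Q X) P)" "endo_over n (rcomp (rcomp Q Y) P)"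
    using PQ XY by (auto simp: inverse_endos_def)
  have "endo_eq n (rcomp X' (rcomp (rcomp Q Y) P)) (rcomp (rcomp (rcomp Q X) P) (rcomp (rcomp Q Y) P))"
    using over(1) X' by (rule endo_eq_rcomp_right)
  also have "endo_eq n \<dots> (rcomp (rcomp Q (rcomp X Y)) P)"
    using PQ XY by (intro conj_rcomp) (simp_all add: inverse_endos_def)
  also have "endo_eq n \<dots> (rcomp (rcomp Q endo_id) P)"
    using PQ XY by (intro endo_eq_rcomp_right endo_eq_rcomp_left) (auto simp: inverse_endos_def)
  also have "endo_eq n \<dots> endo_id"
    using PQ by (simp add: inverse_endos_def)
  finally have X'_inv: "endo_eq n (rcomp X' (rcomp (rcomp Q Y) P)) endo_id" .
  have "endo_eq n Y' (rcomp Y' (rcomp X' (rcomp (rcomp Q Y) P)))"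
    using XY' X'_inv endo_eq_rcomp_left[of n Y' _ endo_id]
    by (simp add: inverse_endos_def endo_eq_sym)
  also have "\<dots> = rcomp (rcomp Y' X') (rcomp (rcomp Q Y) P)"
    by (simp add: rcomp_assoc)
  also have "endo_eq n \<dots> (rcomp endo_id (rcomp (rcomp Q Y) P))"
    using XY' by (intro endo_eq_rcomp_right) (simp_all add: inverse_endos_def)
  finally show ?thesis
    by simp
qed

definition braid_relabel :: "(nat \<Rightarrow> nat) \<Rightarrow> (nat \<times> bool) list \<Rightarrow> (nat \<times> bool) list" where
  "braid_relabel \<pi> \<beta> = map (\<lambda>s. (\<pi> (fst s), snd s)) \<beta>"

lemma braid_word_relabel:
  "braid_word n \<beta> \<Longrightarrow> \<forall>i\<in>{1..<n}. \<pi> i \<in> {1..<n} \<Longrightarrow> braid_word n (braid_relabel \<pi> \<beta>)"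
  by (auto simp: braid_word_def braid_relabel_def)

locale local_conjugation =
  fixes n :: nat and P Q :: "nat \<Rightarrow> word" and \<pi> :: "nat \<Rightarrow> nat" and \<tau> \<tau>' :: "nat \<Rightarrow> endo2"
  assumes PQ: "inverse_endos n P Q"
    and \<pi>: "\<forall>i\<in>{1..<n}. \<pi> i \<in> {1..<n}"
    and aut: "\<forall>i\<in>{1..<n}. is_aut2 (\<tau> i)" and aut': "\<forall>i\<in>{1..<n}. is_aut2 (\<tau>' i)"
    and gen: "\<forall>i\<in>{1..<n}. endo_eq n (Tloc (\<pi> i) (\<tau>' (\<pi> i))) (rcomp (rcomp Q (Tloc i (\<tau> i))) P)"
begin

lemma gen_img_conj:
  assumes s: "1 \<le> fst s" "fst s < n"
  shows "endo_eq n (gen_img \<tau>' (\<pi> (fst s), snd s)) (rcomp (rcomp Q (gen_img \<tau> s)) P)"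
proof -
  obtain i b where s_eq: "s = (i, b)"
    by (cases s)
  have i: "1 \<le> i" "i < n" "1 \<le> \<pi> i" "\<pi> i < n"
    using s \<pi> by (auto simp: s_eq)
  have pos: "endo_eq n (gen_img \<tau>' (\<pi> i, True)) (rcomp (rcomp Q (gen_img \<tau> (i, True))) P)"
    using gen i by (simp add: gen_img_def)
  show ?thesis
  proof (cases b)
    case False
    have "inverse_endos n (gen_img \<tau> (i, True)) (gen_img \<tau> (i, False))"
      "inverse_endos n (gen_img \<tau>' (\<pi> i, True)) (gen_img \<tau>' (\<pi> i, False))"
      using aut aut' i by (auto intro: inverse_endos_gen_img[where s = "(_, True)", simplified])
    with pos False show ?thesis
      using PQ s_eq by (auto intro: conj_inverse)
  qed (use pos s_eq in simp)
qed

lemma Theta_conj: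
  "braid_word n \<beta> \<Longrightarrow> endo_eq n (Theta \<tau>' (braid_relabel \<pi> \<beta>)) (rcomp (rcomp Q (Theta \<tau> \<beta>)) P)"
proof (induct \<beta>)
  case Nil
  then show ?case
    using PQ by (simp add: inverse_endos_def braid_relabel_def endo_eq_sym)
next
  case (Cons s \<beta>)
  then have \<beta>: "braid_word n \<beta>" and s: "1 \<le> fst s" "fst s < n"
    by (auto simp: braid_word_def)
  have over: "endo_over n (gen_img \<tau> s)" "endo_over n (gen_img \<tau>' (\<pi> (fst s), snd s))"
    using aut aut' s \<pi> by (auto intro: endo_over_gen_img)
  have "endo_eq n (Theta \<tau>' (braid_relabel \<pi> (s # \<beta>)))
          (rcomp (rcomp (rcomp Q (gen_img \<tau> s)) P) (rcomp (rcomp Q (Theta \<tau> \<beta>)) P))"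
    using gen_img_conj[OF s] Cons(1)[OF \<beta>] over PQ
    by (auto simp: braid_relabel_def inverse_endos_def intro!: endo_eq_rcomp)
  also have "endo_eq n \<dots> (rcomp (rcomp Q (Theta \<tau> (s # \<beta>))) P)"
    using PQ over by (simp add: conj_rcomp)
  finally show ?case .
qed

lemma G_Theta_iso_conj:
  "braid_word n \<beta> \<Longrightarrow> G_Theta \<tau>' n (braid_relabel \<pi> \<beta>) \<cong> G_Theta \<tau> n \<beta>"
  unfolding G_Theta_fix_relators
  by (rule fix_relators_iso_conj[OF endo_over_Theta endo_over_Theta PQ Theta_conj])
    (use aut aut' \<pi> in \<open>simp_all add: braid_word_relabel\<close>)

end

section \<open>Sign changes and the reversal of the generators\<close>

definition twist_word :: "bool \<Rightarrow> bool \<Rightarrow> word \<Rightarrow> word" where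
  "twist_word e s w = map (\<lambda>l. (fst l, snd l = (if fst l = 0 then e else s))) w"

text \<open>The conjugate of a pair by the automorphism a \<mapsto> a^e, b \<mapsto> b^s of F_2, with the signs
  e, s encoded as booleans (True for +1).\<close>

definition twist :: "bool \<Rightarrow> bool \<Rightarrow> endo2 \<Rightarrow> endo2" where
  "twist e s \<kappa> =
     (twist_word e s (if e then fst \<kappa> else inv_word (fst \<kappa>)),
      twist_word e s (if s then snd \<kappa> else inv_word (snd \<kappa>)))"

definition sign_endo :: "(nat \<Rightarrow> bool) \<Rightarrow> nat \<Rightarrow> word" where
  "sign_endo \<epsilon> = (\<lambda>j. [(j, \<epsilon> j)])"

lemma twist_word_Nil [simp]: "twist_word e s [] = []"
  by (simp add: twist_word_def)

lemma twist_word_append [simp]: "twist_word e s (u @ v) = twist_word e s u @ twist_word e s v"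
  by (simp add: twist_word_def)

lemma twist_word_inv_word [simp]: "twist_word e s (inv_word w) = inv_word (twist_word e s w)"
  by (induct w) (auto simp: twist_word_def)

lemma word_over_twist_word [simp]: "word_over S (twist_word e s w) = word_over S w"
  by (simp add: twist_word_def word_over_def)

lemma is_endo2_twist: "is_endo2 \<kappa> \<Longrightarrow> is_endo2 (twist e s \<kappa>)"
  by (simp add: is_endo2_def twist_def)

lemma rcomp_sign_endo [simp]: "rcomp (sign_endo \<epsilon>) (sign_endo \<epsilon>) = endo_id"
  by (simp add: sign_endo_def rcomp_def endo_id_def fun_eq_iff)

lemma inverse_endos_sign_endo: "inverse_endos n (sign_endo \<epsilon>) (sign_endo \<epsilon>)"
  using rcomp_sign_endo[of \<epsilon>] by (simp add: inverse_endos_def endo_over_def sign_endo_def)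

lemma subst_sign_endo_shift:
  "word_over {0,1} w \<Longrightarrow> subst (sign_endo \<epsilon>) (subst (shift i) w) = subst (shift i) (twist_word (\<epsilon> i) (\<epsilon> (Suc i)) w)"
  by (induct w) (auto simp: shift_def sign_endo_def twist_word_def)

lemma sign_endo_conj_Tloc:
  assumes "is_endo2 \<kappa>"
  shows "rcomp (rcomp (sign_endo \<epsilon>) (Tloc i \<kappa>)) (sign_endo \<epsilon>) = Tloc i (twist (\<epsilon> i) (\<epsilon> (Suc i)) \<kappa>)"
proof
  fix j
  show "rcomp (rcomp (sign_endo \<epsilon>) (Tloc i \<kappa>)) (sign_endo \<epsilon>) j = Tloc i (twist (\<epsilon> i) (\<epsilon> (Suc i)) \<kappa>) j"
    using assms subst_sign_endo_shift[of "fst \<kappa>" \<epsilon> i] subst_sign_endo_shift[of "snd \<kappa>" \<epsilon> i]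
    by (cases "j = i"; cases "j = Suc i")
      (auto simp: rcomp_def Tloc_at Tloc_at_Suc Tloc_other twist_def is_endo2_def sign_endo_def)
qed

definition reverse_endo :: "nat \<Rightarrow> nat \<Rightarrow> word" where
  "reverse_endo n = (\<lambda>j. [(n + 1 - j, False)])"

definition mirror_word :: "word \<Rightarrow> word" where
  "mirror_word w = map (\<lambda>l. (1 - fst l, \<not> snd l)) w"

definition mirror :: "endo2 \<Rightarrow> endo2" where
  "mirror \<kappa> = (mirror_word (inv_word (snd \<kappa>)), mirror_word (inv_word (fst \<kappa>)))"

lemma mirror_word_append [simp]: "mirror_word (u @ v) = mirror_word u @ mirror_word v"
  by (simp add: mirror_word_def)

lemma mirror_word_inv_word [simp]: "mirror_word (inv_word w) = inv_word (mirror_word w)"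
  by (induct w) (auto simp: mirror_word_def)

lemma is_endo2_mirror: "is_endo2 \<kappa> \<Longrightarrow> is_endo2 (mirror \<kappa>)"
  by (auto simp: is_endo2_def mirror_def mirror_word_def word_over_def)

lemma inverse_endos_reverse_endo: "inverse_endos n (reverse_endo n) (reverse_endo n)"
  by (auto simp: inverse_endos_def endo_over_def endo_eq_def rcomp_def reverse_endo_def endo_id_def)

lemma subst_reverse_endo_shift:
  "word_over {0,1} w \<Longrightarrow> 1 \<le> i \<Longrightarrow> i < n \<Longrightarrow>
    subst (reverse_endo n) (subst (shift i) w) = subst (shift (n - i)) (mirror_word w)"
  by (induct w) (auto simp: shift_def reverse_endo_def mirror_word_def)

lemma reverse_endo_conj_Tloc:
  assumes \<kappa>: "is_endo2 \<kappa>" and i: "1 \<le> i" "i < n"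
  shows "endo_eq n (rcomp (rcomp (reverse_endo n) (Tloc i \<kappa>)) (reverse_endo n)) (Tloc (n - i) (mirror \<kappa>))"
  unfolding endo_eq_def
proof
  fix j assume j: "j \<in> {1..n}"
  have "rcomp (rcomp (reverse_endo n) (Tloc i \<kappa>)) (reverse_endo n) j = Tloc (n - i) (mirror \<kappa>) j"
  proof (cases "j = n - i \<or> j = Suc (n - i)")
    case True
    then show ?thesis
      using \<kappa> i subst_reverse_endo_shift[of "inv_word (fst \<kappa>)" i n]
        subst_reverse_endo_shift[of "inv_word (snd \<kappa>)" i n]
      by (auto simp: rcomp_def reverse_endo_def Tloc_at Tloc_at_Suc mirror_def is_endo2_def
          Suc_diff_Suc)
  next
    case False
    with j i have "n + 1 - j \<noteq> i" "n + 1 - j \<noteq> Suc i"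
      by auto
    with False j show ?thesis
      by (simp add: rcomp_def reverse_endo_def Tloc_other)
  qed
  then show "reduce (rcomp (rcomp (reverse_endo n) (Tloc i \<kappa>)) (reverse_endo n) j) =
             reduce (Tloc (n - i) (mirror \<kappa>) j)"
    by simp
qed

section \<open>The Garside element\<close>

fun down_word :: "nat \<Rightarrow> nat list" where
  "down_word 0 = []"
| "down_word (Suc m) = Suc m # down_word m"

fun garside_word :: "nat \<Rightarrow> nat list" where
  "garside_word 0 = []"
| "garside_word (Suc m) = garside_word m @ down_word m"

lemma set_down_word: "set (down_word m) = {1..m}"
  by (induct m) auto

lemma set_garside_word: "set (garside_word m) \<subseteq> {1..<m}"
  by (induct m) (auto simp: set_down_word)

definition pos_braid :: "nat list \<Rightarrow> (nat \<times> bool) list" where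
  "pos_braid ks = map (\<lambda>k. (k, True)) ks"

lemma pos_braid_simps [simp]:
  "pos_braid [] = []"
  "pos_braid (k # ks) = (k, True) # pos_braid ks"
  "pos_braid (ks @ ls) = pos_braid ks @ pos_braid ls"
  by (simp_all add: pos_braid_def)

definition gens_below :: "nat \<Rightarrow> nat list \<Rightarrow> bool" where
  "gens_below n ks \<longleftrightarrow> (\<forall>k\<in>set ks. 1 \<le> k \<and> k < n)"

lemma gens_below_simps [simp]:
  "gens_below n []"
  "gens_below n (k # ks) \<longleftrightarrow> 1 \<le> k \<and> k < n \<and> gens_below n ks"
  "gens_below n (ks @ ls) \<longleftrightarrow> gens_below n ks \<and> gens_below n ls"
  by (auto simp: gens_below_def)

lemma braid_word_pos_braid: "gens_below n ks \<Longrightarrow> braid_word n (pos_braid ks)"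
  by (auto simp: gens_below_def braid_word_def pos_braid_def)

lemma gens_below_down_word: "m < n \<Longrightarrow> gens_below n (down_word m)"
  by (auto simp: gens_below_def set_down_word)

lemma gens_below_garside_word: "m \<le> n \<Longrightarrow> gens_below n (garside_word m)"
  using set_garside_word[of m] by (auto simp: gens_below_def)

locale local_representation =
  fixes n :: nat and \<tau> :: "nat \<Rightarrow> endo2"
  assumes local_rep: "local_rep n \<tau>"
begin

lemma aut: "\<forall>i\<in>{1..<n}. is_aut2 (\<tau> i)"
  using local_rep by (simp add: local_rep_def)

definition pos_eq :: "nat list \<Rightarrow> nat list \<Rightarrow> bool" where
  "pos_eq ks ls \<longleftrightarrow>
     gens_below n ks \<and> gens_below n ls \<and> endo_eq n (Theta \<tau> (pos_braid ks)) (Theta \<tau> (pos_braid ls))"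

lemma pos_eq_refl: "gens_below n ks \<Longrightarrow> pos_eq ks ks"
  by (simp add: pos_eq_def)

lemma pos_eq_sym: "pos_eq ks ls \<Longrightarrow> pos_eq ls ks"
  by (simp add: pos_eq_def endo_eq_sym)

lemma pos_eq_trans [trans]: "pos_eq ks ls \<Longrightarrow> pos_eq ls ms \<Longrightarrow> pos_eq ks ms"
  by (auto simp: pos_eq_def intro: endo_eq_trans)

lemma pos_eq_append_cong:
  assumes eq: "pos_eq ks ls" and a: "gens_below n a" and b: "gens_below n b"
  shows "pos_eq (a @ ks @ b) (a @ ls @ b)"
proof -
  have gens: "gens_below n ks" "gens_below n ls"
    and "endo_eq n (Theta \<tau> (pos_braid ks)) (Theta \<tau> (pos_braid ls))"
    using eq by (auto simp: pos_eq_def)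
  then have "endo_eq n (rcomp (Theta \<tau> (pos_braid a)) (rcomp (Theta \<tau> (pos_braid ks)) (Theta \<tau> (pos_braid b))))
                       (rcomp (Theta \<tau> (pos_braid a)) (rcomp (Theta \<tau> (pos_braid ls)) (Theta \<tau> (pos_braid b))))"
    using a by (intro endo_eq_rcomp_left endo_eq_rcomp_right endo_over_Theta[OF braid_word_pos_braid aut])
  then show ?thesis
    using gens a b by (simp add: pos_eq_def Theta_append)
qed

lemma pos_eq_append_left: "pos_eq ks ls \<Longrightarrow> gens_below n a \<Longrightarrow> pos_eq (a @ ks) (a @ ls)"
  using pos_eq_append_cong[of ks ls a "[]"] by simp

lemma pos_eq_far_comm:
  assumes "1 \<le> i" "i < n" "1 \<le> j" "j < n" "i + 2 \<le> j \<or> j + 2 \<le> i"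
  shows "pos_eq [i, j] [j, i]"
proof -
  have "endo_eq n (rcomp (Tloc i (\<tau> i)) (Tloc j (\<tau> j))) (rcomp (Tloc j (\<tau> j)) (Tloc i (\<tau> i)))"
    using local_rep assms by (auto simp: local_rep_def intro: endo_eq_sym)
  with assms show ?thesis
    by (simp add: pos_eq_def gen_img_def)
qed

lemma pos_eq_braid:
  assumes "1 \<le> i" "i + 1 < n"
  shows "pos_eq [i, Suc i, i] [Suc i, i, Suc i]"
  using local_rep assms by (auto simp: local_rep_def pos_eq_def gen_img_def rcomp_assoc)

lemma pos_eq_far_comm_word:
  "1 \<le> k \<Longrightarrow> k < n \<Longrightarrow> gens_below n w \<Longrightarrow> \<forall>x\<in>set w. x + 2 \<le> k \<or> k + 2 \<le> x \<Longrightarrow>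
    pos_eq (k # w) (w @ [k])"
proof (induct w)
  case (Cons x w)
  have swap: "pos_eq ([] @ [k, x] @ w) ([] @ [x, k] @ w)"
    using Cons by (intro pos_eq_append_cong pos_eq_far_comm) auto
  have pass: "pos_eq ([x] @ (k # w)) ([x] @ (w @ [k]))"
    using Cons by (intro pos_eq_append_left) auto
  show ?case
    using pos_eq_trans[OF swap[simplified] pass[simplified]] by simp
qed (simp add: pos_eq_refl)

lemma down_word_conj:
  "1 \<le> j \<Longrightarrow> j < m \<Longrightarrow> m < n \<Longrightarrow> pos_eq (j # down_word m) (down_word m @ [Suc j])"
proof (induct m)
  case (Suc m)
  show ?case
  proof (cases "j = m")
    case True
    obtain p where p: "j = Suc p"
      using Suc(2) by (cases j) auto
    have gens: "gens_below n (down_word p)"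
      using Suc(4) p True by (intro gens_below_down_word) simp
    have braid: "pos_eq ([] @ [j, Suc j, j] @ down_word p) ([] @ [Suc j, j, Suc j] @ down_word p)"
      using Suc True gens by (intro pos_eq_append_cong pos_eq_braid) auto
    have pass: "pos_eq ([Suc j, j] @ (Suc j # down_word p)) ([Suc j, j] @ (down_word p @ [Suc j]))"
      using Suc True gens p by (intro pos_eq_append_left pos_eq_far_comm_word) (auto simp: set_down_word)
    have "down_word m = m # down_word p"
      unfolding True[symmetric] p by simp
    then show ?thesis
      using pos_eq_trans[OF braid[simplified] pass[simplified]] True p by simp
  next
    case False
    then have "j < m"
      using Suc by simp
    then have swap: "pos_eq ([] @ [j, Suc m] @ down_word m) ([] @ [Suc m, j] @ down_word m)"
      using Suc by (intro pos_eq_append_cong pos_eq_far_comm gens_below_down_word) auto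
    have pass: "pos_eq ([Suc m] @ (j # down_word m)) ([Suc m] @ (down_word m @ [Suc j]))"
      using Suc \<open>j < m\<close> by (intro pos_eq_append_left Suc(1)) auto
    show ?thesis
      using pos_eq_trans[OF swap[simplified] pass[simplified]] by simp
  qed
qed simp

lemma down_word_square:
  "1 \<le> m \<Longrightarrow> m < n \<Longrightarrow> pos_eq (down_word m @ down_word m) (down_word (m - 1) @ down_word m @ [1])"
proof (induct m)
  case (Suc m)
  show ?case
  proof (cases m)
    case 0
    then show ?thesis
      using Suc by (simp add: pos_eq_refl)
  next
    case (Suc p)
    let ?m = "Suc (Suc p)" and ?d = "down_word p"
    have lt: "?m < n"
      using \<open>Suc m < n\<close> Suc by simp
    have gens: "gens_below n ?d"
      using lt by (intro gens_below_down_word) simp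
    have pass1: "pos_eq ([?m, Suc p] @ (?m # ?d) @ (Suc p # ?d)) ([?m, Suc p] @ (?d @ [?m]) @ (Suc p # ?d))"
      using lt gens by (intro pos_eq_append_cong pos_eq_far_comm_word) (auto simp: set_down_word)
    have braid: "pos_eq ([] @ [Suc p, ?m, Suc p] @ (?d @ Suc p # ?d)) ([] @ [?m, Suc p, ?m] @ (?d @ Suc p # ?d))"
      using lt gens by (intro pos_eq_append_cong pos_eq_braid) auto
    have square: "pos_eq ([Suc p, ?m] @ (down_word (Suc p) @ down_word (Suc p)) @ [])
                          ([Suc p, ?m] @ (?d @ down_word (Suc p) @ [1]) @ [])"
      using lt Suc.hyps \<open>m = Suc p\<close> by (intro pos_eq_append_cong) auto
    have pass2: "pos_eq ([Suc p] @ (?m # ?d) @ (down_word (Suc p) @ [1])) ([Suc p] @ (?d @ [?m]) @ (down_word (Suc p) @ [1]))"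
      using lt gens by (intro pos_eq_append_cong pos_eq_far_comm_word gens_below_down_word)
        (auto simp: set_down_word)
    have "pos_eq (down_word ?m @ down_word ?m) ([?m, Suc p] @ (?m # ?d) @ (Suc p # ?d))"
      using pos_eq_sym[OF pass1] by simp
    also have "pos_eq \<dots> ([Suc p, ?m, Suc p] @ (?d @ Suc p # ?d))"
      using pos_eq_sym[OF braid] by simp
    also have "pos_eq \<dots> ([Suc p, ?m] @ (?d @ down_word (Suc p) @ [1]))"
      using square by simp
    also have "pos_eq \<dots> ([Suc p] @ (?d @ [?m]) @ (down_word (Suc p) @ [1]))"
      using pass2 by simp
    finally show ?thesis
      using Suc by simp
  qed
qed simp

lemma garside_word_conj:
  "m \<le> n \<Longrightarrow> 1 \<le> i \<Longrightarrow> i < m \<Longrightarrow> pos_eq (i # garside_word m) (garside_word m @ [m - i])"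
proof (induct m arbitrary: i)
  case (Suc m)
  have gens: "gens_below n (garside_word m)" "gens_below n (down_word m)"
    using Suc by (auto intro: gens_below_garside_word gens_below_down_word)
  show ?case
  proof (cases "i < m")
    case True
    then have pass1: "pos_eq ([] @ (i # garside_word m) @ down_word m) ([] @ (garside_word m @ [m - i]) @ down_word m)"
      using Suc gens by (intro pos_eq_append_cong Suc(1)) auto
    have pass2: "pos_eq (garside_word m @ ((m - i) # down_word m) @ []) (garside_word m @ (down_word m @ [Suc (m - i)]) @ [])"
      using Suc True gens by (intro pos_eq_append_cong down_word_conj) auto
    show ?thesis
      using pos_eq_trans[OF pass1[simplified] pass2[simplified]] True by (simp add: Suc_diff_le)
  next
    case False
    then have i: "i = m"
      using Suc by simp
    show ?thesis
    proof (cases "m = 1")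
      case True
      then show ?thesis
        using Suc.prems i by (simp add: pos_eq_refl numeral_2_eq_2)
    next
      case False
      then obtain p where p: "m = Suc p" "1 \<le> p"
        using i Suc(3) by (cases m) auto
      have gens_p: "gens_below n (garside_word p)"
        using Suc p by (intro gens_below_garside_word) simp
      have pass: "pos_eq ([] @ (m # garside_word p) @ (down_word p @ down_word m))
                         ([] @ (garside_word p @ [m]) @ (down_word p @ down_word m))"
        using Suc p gens gens_p set_garside_word[of p]
        by (intro pos_eq_append_cong pos_eq_far_comm_word gens_below_down_word) (auto simp: gens_below_def)
      have square: "pos_eq (garside_word p @ (down_word m @ down_word m) @ [])
                           (garside_word p @ (down_word (m - 1) @ down_word m @ [1]) @ [])"
        using Suc p gens_p by (intro pos_eq_append_cong down_word_square) auto
      have down: "down_word m = m # down_word p"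
        using p by simp
      have "pos_eq (m # garside_word p @ down_word p @ m # down_word p)
                   (garside_word p @ m # down_word p @ m # down_word p)"
        using pass down by simp
      also have "pos_eq \<dots> (garside_word p @ down_word p @ m # down_word p @ [1])"
        using square down p by simp
      finally show ?thesis
        using i p by simp
    qed
  qed
qed simp

definition garside :: "nat \<Rightarrow> word" where
  "garside = Theta \<tau> (pos_braid (garside_word n))"

definition garside_inv :: "nat \<Rightarrow> word" where
  "garside_inv = Theta \<tau> (braid_inv (pos_braid (garside_word n)))"

lemma inverse_endos_garside: "inverse_endos n garside garside_inv"
  unfolding garside_def garside_inv_def
  by (rule inverse_endos_Theta_braid_inv[OF aut braid_word_pos_braid[OF gens_below_garside_word]]) simp

lemma garside_conj_Tloc:
  assumes i: "1 \<le> i" "i < n"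
  shows "endo_eq n (Tloc (n - i) (\<tau> (n - i))) (rcomp (rcomp garside_inv (Tloc i (\<tau> i))) garside)"
proof -
  have "pos_eq (i # garside_word n) (garside_word n @ [n - i])"
    using i by (intro garside_word_conj) simp_all
  then have comm: "endo_eq n (rcomp (Tloc i (\<tau> i)) garside) (rcomp garside (Tloc (n - i) (\<tau> (n - i))))"
    by (simp add: pos_eq_def Theta_append garside_def gen_img_def)
  have "endo_eq n (rcomp garside_inv (rcomp (Tloc i (\<tau> i)) garside))
                  (rcomp garside_inv (rcomp garside (Tloc (n - i) (\<tau> (n - i)))))"
    using inverse_endos_garside comm by (intro endo_eq_rcomp_left) (simp_all add: inverse_endos_def)
  also have "\<dots> = rcomp (rcomp garside_inv garside) (Tloc (n - i) (\<tau> (n - i)))"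
    by (simp add: rcomp_assoc)
  also have "endo_eq n \<dots> (rcomp endo_id (Tloc (n - i) (\<tau> (n - i))))"
    using inverse_endos_garside by (intro endo_eq_rcomp_right) (simp_all add: inverse_endos_def)
  finally show ?thesis
    by (simp add: rcomp_assoc endo_eq_sym)
qed

lemma G_Theta_reverse_iso:
  assumes "braid_word n \<beta>"
  shows "G_Theta \<tau> n (braid_relabel (\<lambda>i. n - i) \<beta>) \<cong> G_Theta \<tau> n \<beta>"
proof -
  interpret local_conjugation n garside garside_inv "\<lambda>i. n - i" \<tau> \<tau>
    by unfold_locales (auto simp: inverse_endos_garside aut garside_conj_Tloc)
  show ?thesis
    using assms by (rule G_Theta_iso_conj)
qed

end

section \<open>Normal forms of the quadruples of a given type\<close>

lemma twist_word_eq_subst: "twist_word e s w = subst (sign_endo (\<lambda>k. if k = 0 then e else s)) w"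
  by (induct w) (auto simp: twist_word_def sign_endo_def)

lemma endo2_fun_twist:
  "endo2_fun (twist e s g) =
     rcomp (rcomp (sign_endo (\<lambda>k. if k = 0 then e else s)) (endo2_fun g)) (sign_endo (\<lambda>k. if k = 0 then e else s))"
  by (auto simp: fun_eq_iff rcomp_def endo2_fun_def twist_def sign_endo_def twist_word_eq_subst)

lemma reduce_subst_is_inverse2:
  assumes "is_inverse2 t g" "word_over {0,1} w"
  shows "reduce (subst (endo2_fun g) (subst (endo2_fun t) w)) = reduce w"
  unfolding subst_subst
proof -
  have "reduce (subst (\<lambda>j. subst (endo2_fun g) (endo2_fun t j)) w) = reduce (subst (\<lambda>j. [(j, True)]) w)"
  proof (rule reduce_subst_fun_cong)
    fix j assume "j \<in> fst ` set w"
    then have "j \<in> {0,1}"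
      using assms(2) by (auto simp: word_over_def)
    then show "reduce (subst (endo2_fun g) (endo2_fun t j)) = reduce [(j, True)]"
      using assms(1) by (auto simp: is_inverse2_def)
  qed
  then show "reduce (subst (\<lambda>j. subst (endo2_fun g) (endo2_fun t j)) w) = reduce w"
    by simp
qed

lemma twist_word_twist_word: "twist_word x y (twist_word u v w) = twist_word (x = u) (y = v) w"
  by (induct w) (auto simp: twist_word_def)

lemma twist_twist: "twist x y (twist u v k) = twist (x = u) (y = v) k"
  by (cases x; cases y; cases u; cases v) (simp_all add: twist_def twist_word_twist_word)

lemma twist_True_True [simp]: "twist True True k = k"
  by (simp add: twist_def twist_word_def prod_eq_iff)

lemma inv_word_twist_word_False: "inv_word (twist_word False False w) = rev w"
  by (induct w) (auto simp: twist_word_def)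

definition swap_pair :: "endo2 \<Rightarrow> endo2" where
  "swap_pair k = (swap_letters (snd k), swap_letters (fst k))"

lemma swap_letters_append [simp]: "swap_letters (u @ v) = swap_letters u @ swap_letters v"
  by (simp add: swap_letters_def)

lemma swap_letters_inv_word [simp]: "swap_letters (inv_word w) = inv_word (swap_letters w)"
  by (induct w) (auto simp: swap_letters_def)

lemma swap_pair_twist: "swap_pair (twist x y k) = twist y x (swap_pair k)"
proof -
  have "swap_letters (twist_word x y w) = twist_word y x (swap_letters w)" for w
    by (induct w) (auto simp: swap_letters_def twist_word_def)
  then show ?thesis
    by (cases x; cases y) (simp_all add: swap_pair_def twist_def)
qed

lemma swap_pair_swap_pair: "is_endo2 k \<Longrightarrow> swap_pair (swap_pair k) = k"
proof -
  have "word_over {0,1} w \<Longrightarrow> swap_letters (swap_letters w) = w" for w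
    by (induct w) (auto simp: swap_letters_def)
  then show "is_endo2 k \<Longrightarrow> swap_pair (swap_pair k) = k"
    by (simp add: swap_pair_def is_endo2_def)
qed

lemma mirror_eq_swap_pair: "mirror k = swap_pair (twist False False k)"
proof -
  have "mirror_word w = swap_letters (twist_word False False w)" for w
    by (induct w) (auto simp: mirror_word_def swap_letters_def twist_word_def)
  then show ?thesis
    by (simp add: mirror_def swap_pair_def twist_def)
qed

lemma mirror_mirror: "is_endo2 k \<Longrightarrow> mirror (mirror k) = k"
  by (simp add: mirror_eq_swap_pair swap_pair_twist twist_twist swap_pair_swap_pair is_endo2_twist)

definition quad_of :: "endo2 \<Rightarrow> endo2 \<Rightarrow> quad" where
  "quad_of P Q = (fst P, snd P, fst Q, snd Q)"

lemma qswap_quad_of: "qswap (quad_of P Q) = quad_of (swap_pair Q) (swap_pair P)"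
  by (simp add: qswap_def quad_of_def swap_pair_def case_prod_unfold)

lemma qback_quad_of: "qback (quad_of P Q) = quad_of (twist False False P) (twist False False Q)"
  by (simp add: qback_def quad_of_def twist_def inv_word_twist_word_False case_prod_unfold)

lemma is_inverse2_twist:
  assumes g: "is_inverse2 k g" and k: "is_endo2 k"
  shows "is_inverse2 (twist x y k) (twist x y g)"
proof -
  define \<sigma> where "\<sigma> = sign_endo (\<lambda>k. if k = 0 then x else y)"
  have twist_eq: "endo2_fun (twist x y h) = rcomp (rcomp \<sigma> (endo2_fun h)) \<sigma>" for h
    by (simp add: endo2_fun_twist \<sigma>_def)
  have \<sigma>\<sigma>: "subst \<sigma> (subst \<sigma> w) = w" for w
    using subst_rcomp[of \<sigma> \<sigma> w] by (simp add: \<sigma>_def)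
  have twisted: "reduce (subst (endo2_fun (twist x y g)) (endo2_fun (twist x y k) j)) = [(j, True)]"
    if gk: "is_inverse2 k g" and j: "j \<in> {0,1}" for k g j
  proof -
    have "subst (endo2_fun (twist x y g)) (endo2_fun (twist x y k) j) =
          subst \<sigma> (subst (endo2_fun g) (subst \<sigma> (subst \<sigma> (subst (endo2_fun k) (\<sigma> j)))))"
      unfolding twist_eq subst_rcomp by (simp add: rcomp_def)
    also have "\<dots> = subst \<sigma> (subst (endo2_fun g) (subst (endo2_fun k) (\<sigma> j)))"
      by (simp only: \<sigma>\<sigma>)
    also have "reduce \<dots> = reduce (subst \<sigma> (\<sigma> j))"
      using gk j by (intro reduce_subst_cong reduce_subst_is_inverse2) (auto simp: \<sigma>_def sign_endo_def)
    also have "\<dots> = [(j, True)]"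
      by (simp add: \<sigma>_def sign_endo_def)
    finally show ?thesis .
  qed
  show ?thesis
    using twisted[OF g] twisted[OF is_inverse2_sym[OF g k]] is_inverse2_is_endo2[OF g] k
    by (auto simp: is_inverse2_def is_endo2_def twist_def)
qed

lemma is_inverse2_unique:
  assumes g: "is_inverse2 t g" and h: "is_inverse2 t h"
  shows "reduce (fst g) = reduce (fst h) \<and> reduce (snd g) = reduce (snd h)"
proof -
  have "reduce (endo2_fun h k) = reduce (endo2_fun g k)" if k: "k \<in> {0,1}" for k
  proof -
    have "word_over {0,1} (endo2_fun h k)"
      using is_inverse2_is_endo2[OF h] by (simp add: is_endo2_def endo2_fun_def)
    then have "reduce (endo2_fun h k) = reduce (subst (endo2_fun g) (subst (endo2_fun t) (endo2_fun h k)))"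
      using g by (simp add: reduce_subst_is_inverse2)
    also have "\<dots> = reduce (subst (endo2_fun g) [(k, True)])"
      using h k by (intro reduce_subst_cong) (auto simp: is_inverse2_def)
    finally show ?thesis
      by simp
  qed
  from this[of 0] this[of 1] show ?thesis
    by (simp add: endo2_fun_def)
qed

lemma reduced_map:
  assumes "inj h" and "\<And>l. h (inv_letter l) = inv_letter (h l)"
  shows "reduced (map h w) = reduced w"
proof (induct w rule: reduced.induct)
  case (3 x y ys)
  have "h y = inv_letter (h x) \<longleftrightarrow> y = inv_letter x"
    using assms by (metis injD)
  with 3 show ?case
    by simp
qed simp_all

lemma reduced_rev: "reduced (rev w) = reduced w"
proof -
  have snoc2: "reduced (w @ [a, b]) \<longleftrightarrow> reduced (w @ [a]) \<and> b \<noteq> inv_letter a" for w a b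
    by (induct w rule: reduced.induct) auto
  show ?thesis
    by (induct w rule: reduced.induct) (auto simp: snoc2 inv_letter_def)
qed

lemma reduced_twist:
  assumes "reduced (fst k)" "reduced (snd k)"
  shows "reduced (fst (twist x y k)) \<and> reduced (snd (twist x y k))"
proof -
  have "reduced (twist_word x y w) = reduced w" for w
    unfolding twist_word_def by (rule reduced_map) (auto simp: inj_def inv_letter_def)
  moreover have "reduced (inv_word w) = reduced w" for w
    unfolding inv_word_def by (simp add: reduced_rev reduced_map inj_def inv_letter_def)
  ultimately show ?thesis
    using assms by (simp add: twist_def)
qed

definition variant :: "endo2 \<Rightarrow> bool \<Rightarrow> endo2" where
  "variant b f = (if f then b else mirror b)"

definition good_base :: "endo2 \<Rightarrow> bool" where
  "good_base b \<longleftrightarrow> is_endo2 b \<and> is_inverse2 b (mirror b) \<and>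
     reduced (fst b) \<and> reduced (snd b) \<and> reduced (fst (mirror b)) \<and> reduced (snd (mirror b))"

definition twisted_quad :: "endo2 \<Rightarrow> quad \<Rightarrow> bool" where
  "twisted_quad b q \<longleftrightarrow> (\<exists>f e s s'. q = quad_of (twist e s (variant b f)) (twist s s' (variant b f)))"

lemma good_base_is_endo2: "good_base b \<Longrightarrow> is_endo2 (variant b f)"
  by (auto simp: good_base_def variant_def is_endo2_mirror)

lemma good_base_is_inverse2: "good_base b \<Longrightarrow> is_inverse2 (variant b f) (variant b (\<not> f))"
  by (auto simp: good_base_def variant_def mirror_mirror intro: is_inverse2_sym is_endo2_mirror)

lemma good_base_is_aut2: "good_base b \<Longrightarrow> is_aut2 (variant b f)"
  using good_base_is_inverse2 good_base_is_endo2 unfolding is_aut2_def is_endo2_def by blast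

lemma good_base_reduced: "good_base b \<Longrightarrow> reduced (fst (variant b f)) \<and> reduced (snd (variant b f))"
  by (auto simp: good_base_def variant_def)

lemma swap_pair_variant: "good_base b \<Longrightarrow> swap_pair (variant b f) = twist False False (variant b (\<not> f))"
  by (cases f)
    (simp_all add: good_base_def variant_def mirror_eq_swap_pair swap_pair_twist twist_twist
      swap_pair_swap_pair is_endo2_twist)

lemma twisted_quad_qswap:
  assumes b: "good_base b" and q: "twisted_quad b q"
  shows "twisted_quad b (qswap q)"
proof -
  obtain f e s s' where "q = quad_of (twist e s (variant b f)) (twist s s' (variant b f))"
    using q by (auto simp: twisted_quad_def)
  then have "qswap q = quad_of (twist (\<not> s') (\<not> s) (variant b (\<not> f))) (twist (\<not> s) (\<not> e) (variant b (\<not> f)))"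
    using b by (simp add: qswap_quad_of swap_pair_twist swap_pair_variant twist_twist)
  then show ?thesis
    unfolding twisted_quad_def by blast
qed

lemma twisted_quad_qback:
  assumes q: "twisted_quad b q"
  shows "twisted_quad b (qback q)"
proof -
  obtain f e s s' where "q = quad_of (twist e s (variant b f)) (twist s s' (variant b f))"
    using q by (auto simp: twisted_quad_def)
  then have "qback q = quad_of (twist (\<not> e) (\<not> s) (variant b f)) (twist (\<not> s) (\<not> s') (variant b f))"
    by (simp add: qback_quad_of twist_twist)
  then show ?thesis
    unfolding twisted_quad_def by blast
qed

lemma reduce_inv2_twist:
  assumes b: "good_base b" and aut: "is_aut2 (twist e s (variant b f))"
  shows "reduce (fst (inv2 (twist e s (variant b f)))) = fst (twist e s (variant b (\<not> f)))"
    and "reduce (snd (inv2 (twist e s (variant b f)))) = snd (twist e s (variant b (\<not> f)))"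
proof -
  have "is_inverse2 (twist e s (variant b f)) (twist e s (variant b (\<not> f)))"
    using b by (intro is_inverse2_twist good_base_is_inverse2 good_base_is_endo2)
  moreover have "reduced (fst (twist e s (variant b (\<not> f)))) \<and> reduced (snd (twist e s (variant b (\<not> f))))"
    using good_base_reduced[OF b] by (intro reduced_twist) auto
  ultimately show "reduce (fst (inv2 (twist e s (variant b f)))) = fst (twist e s (variant b (\<not> f)))"
    and "reduce (snd (inv2 (twist e s (variant b f)))) = snd (twist e s (variant b (\<not> f)))"
    using is_inverse2_unique[OF is_inverse2_inv2[OF aut]] by (auto simp: reduce_reduced)
qed

lemma twisted_quad_qinv:
  assumes b: "good_base b" and q: "twisted_quad b (A, B, C, D)"
    and aut: "is_aut2 (A, B)" "is_aut2 (C, D)"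
  shows "twisted_quad b (qinv (A, B, C, D))"
proof -
  obtain f e s s' where AB: "(A, B) = twist e s (variant b f)" and CD: "(C, D) = twist s s' (variant b f)"
    using q by (auto simp: twisted_quad_def quad_of_def prod_eq_iff)
  have "qinv (A, B, C, D) = quad_of (twist e s (variant b (\<not> f))) (twist s s' (variant b (\<not> f)))"
    using reduce_inv2_twist[OF b aut(1)[unfolded AB]] reduce_inv2_twist[OF b aut(2)[unfolded CD]]
    by (simp add: qinv_def quad_of_def AB CD)
  then show ?thesis
    unfolding twisted_quad_def by blast
qed

lemma sym_equiv_twisted_quad: "sym_equiv q q' \<Longrightarrow> good_base b \<Longrightarrow> twisted_quad b q \<Longrightarrow> twisted_quad b q'"
  by (induct rule: sym_equiv.induct) (auto intro: twisted_quad_qswap twisted_quad_qback twisted_quad_qinv)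

section \<open>The base pairs of the four types\<close>

fun base_pair :: "ltype \<Rightarrow> endo2" where
  "base_pair (TA r) = (apow r @ lb @ aneg r, la)"
| "base_pair TB = (lB, la)"
| "base_pair TC = (la @ lB @ la, la)"
| "base_pair TD = (lA @ lB @ la, lb @ lb @ la)"

lemma mirror_base_pair:
  "mirror (apow r @ lb @ aneg r, la) = (lb, replicate r (1, False) @ la @ replicate r (1, True))"
  "mirror (lB, la) = (lb, lA)"
  "mirror (la @ lB @ la, la) = (lb, lb @ lA @ lb)"
  "mirror (lA @ lB @ la, lb @ lb @ la) = (lb @ la @ la, lb @ lA @ lB)"
  by (simp_all add: apow_def aneg_def mirror_def mirror_word_def inv_word_def rev_map map_replicate)

lemma reduced_replicate_append:
  "reduced w \<Longrightarrow> (w \<noteq> [] \<longrightarrow> hd w \<noteq> inv_letter x) \<Longrightarrow> reduced (replicate r x @ w)"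
proof (induct r)
  case (Suc r)
  then show ?case
    by (cases r) (auto simp: reduced_Cons)
qed simp

lemma reduce_subst_conj_replicate:
  "reduce (concat (replicate r [x]) @ concat (replicate r [inv_letter x]) @ [y] @
           concat (replicate r [x]) @ concat (replicate r [inv_letter x])) = [y]"
  using reduce_replicate_cancel[of "[]" r x "[y] @ replicate r x @ replicate r (inv_letter x)"]
    reduce_replicate_cancel[of "[y]" r x "[]"]
  by simp

lemma good_base_A: "good_base (base_pair (TA r))"
proof -
  have "reduce (subst (endo2_fun (mirror (base_pair (TA r)))) (endo2_fun (base_pair (TA r)) k)) = [(k, True)]"
    "reduce (subst (endo2_fun (base_pair (TA r))) (endo2_fun (mirror (base_pair (TA r))) k)) = [(k, True)]"
    if "k \<in> {0, 1}" for k
    unfolding base_pair.simps mirror_base_pair using that reduce_subst_conj_replicate[of r "(1, True)" "(0, True)"]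
      reduce_subst_conj_replicate[of r "(0, False)" "(1, True)"]
    by (auto simp: mirror_base_pair endo2_fun_def subst_replicate apow_def aneg_def)
  moreover have "reduced (apow r @ lb @ aneg r)" "reduced (replicate r (1, False) @ la @ replicate r (1, True))"
    by (auto simp: apow_def aneg_def intro!: reduced_replicate_append
        simp: reduced_Cons reduced_replicate_append[of "[]", simplified])
  ultimately show ?thesis
    unfolding base_pair.simps mirror_base_pair good_base_def is_inverse2_def is_endo2_def
    by (simp add: apow_def aneg_def)
qed

lemma good_base_base_pair: "good_base (base_pair L)"
proof (cases L)
  case (TA r)
  then show ?thesis
    by (simp only: good_base_A)
qed (simp_all only: base_pair.simps good_base_def mirror_base_pair,
     simp_all add: is_endo2_def is_inverse2_def endo2_fun_def reduce_Cons reduce_step_def)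

text \<open>If a pair is a twisted variant of the base pair in two ways, then every pair following it
  under the second labelling also follows it under the first; this lets the sign labels of
  consecutive quadruples be chained along the whole sequence.\<close>

definition twist_labels_compatible :: "endo2 \<Rightarrow> bool" where
  "twist_labels_compatible b \<longleftrightarrow>
     (\<forall>s s2 t t' t'' f f'. twist s s2 (variant b f) = twist t t' (variant b f') \<longrightarrow>
        (\<exists>s3. twist t' t'' (variant b f') = twist s2 s3 (variant b f)))"

lemma twist_labels_compatible_base_pair: "twist_labels_compatible (base_pair L)"
proof (cases L)
  case (TA r)
  show ?thesis
    unfolding TA twist_labels_compatible_def all_bool_eq ex_bool_eq variant_def base_pair.simps
      mirror_base_pair
    by (cases r)
      (simp_all add: apow_def aneg_def twist_def twist_word_def inv_word_def rev_map map_replicate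
        replicate_app_Cons_same)
qed (simp_all only: twist_labels_compatible_def all_bool_eq ex_bool_eq variant_def base_pair.simps
      mirror_base_pair,
     simp_all add: twist_def twist_word_def)

lemma twisted_quad_listed:
  assumes q: "q \<in> listed L"
  shows "twisted_quad (base_pair L) q"
proof (cases L)
  case (TA r)
  have "\<exists>e s s'. q = quad_of (twist e s (base_pair (TA r))) (twist s s' (base_pair (TA r)))"
    using q unfolding TA ex_bool_eq
    by (auto simp: quad_of_def twist_def twist_word_def apow_def aneg_def inv_word_def rev_map map_replicate)
  then show ?thesis
    unfolding TA twisted_quad_def variant_def by (metis (full_types))
qed (use q in \<open>simp_all only: twisted_quad_def quad_of_def variant_def ex_bool_eq base_pair.simps
      mirror_base_pair, auto simp: twist_def twist_word_def\<close>)

section \<open>Reduction to the base pair\<close>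

definition twisted_by :: "endo2 \<Rightarrow> bool \<Rightarrow> endo2 \<Rightarrow> bool \<Rightarrow> bool \<Rightarrow> bool" where
  "twisted_by b f \<kappa> e s \<longleftrightarrow> (reduce (fst \<kappa>), reduce (snd \<kappa>)) = twist e s (variant b f)"

lemma of_type_twisted_by:
  assumes "of_type L \<tau>" "i \<ge> 1"
  shows "\<exists>f e s s'. twisted_by (base_pair L) f (\<tau> i) e s \<and> twisted_by (base_pair L) f (\<tau> (Suc i)) s s'"
proof -
  let ?quad = "(reduce (fst (\<tau> i)), reduce (snd (\<tau> i)), reduce (fst (\<tau> (i + 1))), reduce (snd (\<tau> (i + 1))))"
  obtain q where q: "q \<in> listed L" and equiv: "sym_equiv q ?quad"
    using assms unfolding of_type_def by blast
  have "twisted_quad (base_pair L) ?quad"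
    by (rule sym_equiv_twisted_quad[OF equiv good_base_base_pair twisted_quad_listed[OF q]])
  then show ?thesis
    by (auto simp: twisted_quad_def quad_of_def twisted_by_def prod_eq_iff)
qed

text \<open>The local labels are glued by choosing the first sign of each pair to be the last sign
  of the previous one; compatibility guarantees that this choice can always be continued.\<close>

lemma exists_global_twist:
  assumes compat: "twist_labels_compatible b"
    and local_twist: "\<And>i. i \<ge> 1 \<Longrightarrow> \<exists>f e s s'. twisted_by b f (\<tau> i) e s \<and> twisted_by b f (\<tau> (Suc i)) s s'"
  shows "\<exists>F \<epsilon>. \<forall>i\<ge>1. twisted_by b F (\<tau> i) (\<epsilon> i) (\<epsilon> (Suc i))"
proof -
  obtain F e0 s0 where first: "twisted_by b F (\<tau> 1) e0 s0"
    using local_twist[of 1] by auto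
  define \<epsilon> where "\<epsilon> = rec_nat e0 (\<lambda>k e. SOME s. twisted_by b F (\<tau> (Suc k)) e s)"
  have \<epsilon>_Suc: "\<epsilon> (Suc k) = (SOME s. twisted_by b F (\<tau> (Suc k)) (\<epsilon> k) s)" for k
    by (simp add: \<epsilon>_def)
  have continues: "\<exists>s. twisted_by b F (\<tau> (Suc m)) (\<epsilon> m) s" for m
  proof (induct m)
    case 0
    then show ?case
      using first by (auto simp: \<epsilon>_def)
  next
    case (Suc m)
    then have here: "twisted_by b F (\<tau> (Suc m)) (\<epsilon> m) (\<epsilon> (Suc m))"
      unfolding \<epsilon>_Suc by (rule someI_ex)
    obtain f e s s' where "twisted_by b f (\<tau> (Suc m)) e s"
      and following: "twisted_by b f (\<tau> (Suc (Suc m))) s s'"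
      using local_twist[of "Suc m"] by auto
    with here have "twist (\<epsilon> m) (\<epsilon> (Suc m)) (variant b F) = twist e s (variant b f)"
      by (simp add: twisted_by_def)
    then obtain s3 where "twist s s' (variant b f) = twist (\<epsilon> (Suc m)) s3 (variant b F)"
      using compat unfolding twist_labels_compatible_def by blast
    with following show ?case
      by (auto simp: twisted_by_def)
  qed
  have "twisted_by b F (\<tau> (Suc m)) (\<epsilon> m) (\<epsilon> (Suc m))" for m
    unfolding \<epsilon>_Suc using continues by (rule someI_ex)
  then have "twisted_by b F (\<tau> i) (\<epsilon> (i - 1)) (\<epsilon> (Suc i - 1))" if "i \<ge> 1" for i
    using that by (cases i) simp_all
  then show ?thesis
    by (intro exI[of _ F] exI[of _ "\<lambda>i. \<epsilon> (i - 1)"]) simp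
qed

lemma group_G_Theta: "group (G_Theta \<tau> n \<beta>)"
  by (simp add: G_Theta_def group_presented_group)

lemma G_Theta_iso_twisted:
  assumes b: "good_base b" and aut: "\<forall>i\<in>{1..<n}. is_aut2 (\<tau> i)"
    and twisted: "\<forall>i\<in>{1..<n}. twisted_by b f (\<tau> i) (\<epsilon> i) (\<epsilon> (Suc i))"
    and \<beta>: "braid_word n \<beta>"
  shows "G_Theta \<tau> n \<beta> \<cong> G_Theta (\<lambda>_. variant b f) n \<beta>"
proof -
  interpret local_conjugation n "sign_endo \<epsilon>" "sign_endo \<epsilon>" "\<lambda>i. i" "\<lambda>_. variant b f" \<tau>
  proof
    show "\<forall>i\<in>{1..<n}. endo_eq n (Tloc i (\<tau> i)) (rcomp (rcomp (sign_endo \<epsilon>) (Tloc i (variant b f))) (sign_endo \<epsilon>))"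
    proof
      fix i assume "i \<in> {1..<n}"
      then have "reduce (fst (\<tau> i)) = fst (twist (\<epsilon> i) (\<epsilon> (Suc i)) (variant b f))"
        "reduce (snd (\<tau> i)) = snd (twist (\<epsilon> i) (\<epsilon> (Suc i)) (variant b f))"
        using twisted by (auto simp: twisted_by_def prod_eq_iff)
      then have "reduce (fst (\<tau> i)) = reduce (fst (twist (\<epsilon> i) (\<epsilon> (Suc i)) (variant b f)))"
        "reduce (snd (\<tau> i)) = reduce (snd (twist (\<epsilon> i) (\<epsilon> (Suc i)) (variant b f)))"
        by (metis reduce_reduce)+
      then show "endo_eq n (Tloc i (\<tau> i)) (rcomp (rcomp (sign_endo \<epsilon>) (Tloc i (variant b f))) (sign_endo \<epsilon>))"
        by (simp add: sign_endo_conj_Tloc good_base_is_endo2[OF b] Tloc_reduce_cong)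
    qed
  qed (use b aut in \<open>simp_all add: inverse_endos_sign_endo good_base_is_aut2\<close>)
  show ?thesis
    using G_Theta_iso_conj[OF \<beta>] by (simp add: braid_relabel_def)
qed

lemma G_Theta_iso_mirror:
  assumes b: "good_base b" and \<beta>: "braid_word n \<beta>"
  shows "G_Theta (\<lambda>_. variant b True) n (braid_relabel (\<lambda>i. n - i) \<beta>) \<cong> G_Theta (\<lambda>_. variant b False) n \<beta>"
proof -
  interpret local_conjugation n "reverse_endo n" "reverse_endo n" "\<lambda>i. n - i" "\<lambda>_. variant b False" "\<lambda>_. variant b True"
  proof
    have "variant b True = mirror (variant b False)"
      using b by (simp add: variant_def good_base_def mirror_mirror)
    then show "\<forall>i\<in>{1..<n}. endo_eq n (Tloc (n - i) (variant b True))
        (rcomp (rcomp (reverse_endo n) (Tloc i (variant b False))) (reverse_endo n))"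
      using reverse_endo_conj_Tloc[OF good_base_is_endo2[OF b]] by (auto intro: endo_eq_sym)
  qed (use b in \<open>auto simp: inverse_endos_reverse_endo good_base_is_aut2\<close>)
  show ?thesis
    by (rule G_Theta_iso_conj[OF \<beta>])
qed

lemma G_Theta_iso_base_pair:
  assumes rep: "local_rep_inf \<tau>" and type: "of_type L \<tau>" and \<beta>: "braid_word n \<beta>"
  shows "G_Theta \<tau> n \<beta> \<cong> G_Theta (\<lambda>_. base_pair L) n \<beta>"
proof -
  let ?b = "base_pair L"
  obtain F \<epsilon> where twisted: "\<forall>i\<ge>1. twisted_by ?b F (\<tau> i) (\<epsilon> i) (\<epsilon> (Suc i))"
    using exists_global_twist[of ?b \<tau>] twist_labels_compatible_base_pair of_type_twisted_by[OF type]
    by blast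
  interpret local_representation n \<tau>
    using rep by unfold_locales (simp add: local_rep_inf_def)
  have iso: "G_Theta \<tau> n \<beta>' \<cong> G_Theta (\<lambda>_. variant ?b F) n \<beta>'" if "braid_word n \<beta>'" for \<beta>'
    using twisted aut that by (intro G_Theta_iso_twisted good_base_base_pair) auto
  show ?thesis
  proof (cases F)
    case True
    then show ?thesis
      using iso[OF \<beta>] by (simp add: variant_def)
  next
    case False
    let ?\<beta>' = "braid_relabel (\<lambda>i. n - i) \<beta>"
    have \<beta>': "braid_word n ?\<beta>'"
      using \<beta> by (auto simp: braid_word_def braid_relabel_def)
    have \<beta>'': "braid_relabel (\<lambda>i. n - i) ?\<beta>' = \<beta>"
      using \<beta> by (induct \<beta>) (auto simp: braid_word_def braid_relabel_def)
    have "G_Theta \<tau> n \<beta> \<cong> G_Theta \<tau> n ?\<beta>'"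
      using G_Theta_reverse_iso[OF \<beta>'] \<beta>'' by simp
    also have "\<dots> \<cong> G_Theta (\<lambda>_. variant ?b False) n ?\<beta>'"
      using iso[OF \<beta>'] False by simp
    also have "\<dots> \<cong> G_Theta (\<lambda>_. ?b) n \<beta>"
      using group.iso_sym[OF group_G_Theta G_Theta_iso_mirror[OF good_base_base_pair \<beta>']] \<beta>''
      by (simp add: variant_def)
    finally show ?thesis .
  qed
qed

theorem theorem4p5:
  fixes \<tau> \<tau>' :: "nat \<Rightarrow> endo2" and L :: ltype
  assumes "local_rep_inf \<tau>" and "local_rep_inf \<tau>'"
    and "of_type L \<tau>" and "of_type L \<tau>'"
  shows "(\<forall>n \<beta>. n \<ge> 1 \<longrightarrow> braid_word n \<beta> \<longrightarrow> G_Theta \<tau> n \<beta> \<cong> G_Theta \<tau>' n \<beta>)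
     \<and> (\<forall>t. local_rep_inf (\<lambda>_. t) \<longrightarrow> of_type L (\<lambda>_. t) \<longrightarrow>
          (\<forall>n \<beta>. n \<ge> 1 \<longrightarrow> braid_word n \<beta> \<longrightarrow> G_Theta \<tau> n \<beta> \<cong> G_Theta (\<lambda>_. t) n \<beta>))"
proof -
  have same_type_iso: "G_Theta \<sigma> n \<beta> \<cong> G_Theta \<sigma>' n \<beta>"
    if "local_rep_inf \<sigma>" "of_type L \<sigma>" "local_rep_inf \<sigma>'" "of_type L \<sigma>'" "braid_word n \<beta>"
    for \<sigma> \<sigma>' n \<beta>
    using G_Theta_iso_base_pair[OF that(1,2,5)]
      group.iso_sym[OF group_G_Theta G_Theta_iso_base_pair[OF that(3,4,5)]]
    by (rule iso_trans)
  show ?thesis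
    using assms by (blast intro: same_type_iso)
qed

end
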